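(* Let $m=m(n)$ satisfy $m(n)\to\infty$ and $m(n)=o(n)$, and let $G_n=K_{m,n-m}$ be the complete bipartite graph with parts of sizes $m$ and $n-m$. Let $N_n$ be the jump count to meeting from distance one on $G_n$. Then $m^{-1}N_n\xrightarrow{D}\mathrm{Exp}(1/4)$. Consequently, if $\lambda_n,\gamma_n\to\infty$ with $\gamma_n=o(\lambda_n/m)$, the end of epidemic time $T_n$ on $G_n$ with walking rate $\lambda_n$ and recovery rate $\gamma_n$ satisfies \[ 4\,\frac{m\gamma_n^2}{\lambda_n}\,T_n\xrightarrow{D}\mathrm{Exp}(1). \]
   Context: Model on a finite connected undirected edge-transitive graph $G$: two agents perform independent continuous-time simple random walks, each holding at a vertex for an $\mathrm{Exp}(\lambda)$ time and then jumping to a uniformly chosen neighbour. Each agent is susceptible or infected; whenever they occupy the same vertex and at least one is infected, both become infected immediately; each infected agent independently recovers after an $\mathrm{Exp}(\gamma)$ time. Initially both are infected at the same vertex. The end of epidemic time is $T=\inf\{t\ge0:\text{both agents are susceptible}\}$. $N$ is the total number of jumps (of both walkers combined) until the two walkers first occupy the same vertex, starting from the two endpoints of an edge. $\mathrm{Exp}(\mu)$ denotes the exponential law with rate $\mu$. *)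

theory Defs
  imports "HOL-Probability.Probability"
begin

text \<open>A graph is given by a vertex set V and an adjacency relation E (only
  the restriction of E to V matters).\<close>

definition nbrs :: "'v set \<Rightarrow> ('v \<Rightarrow> 'v \<Rightarrow> bool) \<Rightarrow> 'v \<Rightarrow> 'v set" where
  "nbrs V E v = {w \<in> V. E v w}"

definition walk_step :: "'v set \<Rightarrow> ('v \<Rightarrow> 'v \<Rightarrow> bool) \<Rightarrow> 'v \<Rightarrow> 'v pmf" where
  "walk_step V E v = pmf_of_set (nbrs V E v)"

definition bip_V :: "nat \<Rightarrow> nat \<Rightarrow> (bool \<times> nat) set" where
  "bip_V a b = {(False, i) | i. i < a} \<union> {(True, j) | j. j < b}"

definition bip_E :: "bool \<times> nat \<Rightarrow> bool \<times> nat \<Rightarrow> bool" where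
  "bip_E x y = (fst x \<noteq> fst y)"

fun hit_within :: "('s \<Rightarrow> 's pmf) \<Rightarrow> ('s \<Rightarrow> bool) \<Rightarrow> nat \<Rightarrow> 's \<Rightarrow> real" where
  "hit_within K A 0 s = (if A s then 1 else 0)"
| "hit_within K A (Suc k) s =
     (if A s then 1 else measure_pmf.expectation (K s) (hit_within K A k))"

text \<open>Both walkers jump at the same rate, so each jump of the pair is made by
  walker 1 or walker 2 with probability 1/2.\<close>
definition pair_step :: "'v set \<Rightarrow> ('v \<Rightarrow> 'v \<Rightarrow> bool) \<Rightarrow> 'v \<times> 'v \<Rightarrow> ('v \<times> 'v) pmf" where
  "pair_step V E p = bind_pmf (bernoulli_pmf (1/2)) (\<lambda>b.
      if b then map_pmf (\<lambda>x'. (x', snd p)) (walk_step V E (fst p))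
           else map_pmf (\<lambda>y'. (fst p, y')) (walk_step V E (snd p)))"

text \<open>Distribution function of N (total number of jumps until the walkers first
  occupy the same vertex), started from (u,v): meet_cdf V E u v y = P(N \<le> y).\<close>
definition meet_cdf :: "'v set \<Rightarrow> ('v \<Rightarrow> 'v \<Rightarrow> bool) \<Rightarrow> 'v \<Rightarrow> 'v \<Rightarrow> real \<Rightarrow> real" where
  "meet_cdf V E u v y =
     (if y < 0 then 0 else hit_within (pair_step V E) (\<lambda>p. fst p = snd p) (nat \<lfloor>y\<rfloor>) (u, v))"

text \<open>State: (position 1, position 2, agent 1 infected, agent 2 infected).
  Infection rule: whenever both are at the same vertex and one is infected,
  both are infected.\<close>
definition infect :: "'v \<times> 'v \<times> bool \<times> bool \<Rightarrow> 'v \<times> 'v \<times> bool \<times> bool" where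
  "infect s = (case s of (x, y, ix, iy) \<Rightarrow>
      if x = y \<and> (ix \<or> iy) then (x, y, True, True) else (x, y, ix, iy))"

text \<open>Poisson-clock (uniformised) construction: each agent carries a rate lam
  clock for jumps and a rate gam clock for recoveries (a recovery mark of a
  susceptible agent has no effect).  The superposition is a Poisson process of
  rate 2(lam+gam); at each of its events one of the four clocks rings, jump
  vs. recovery with probabilities lam/(lam+gam), gam/(lam+gam), each agent
  with probability 1/2.  epi_step is the resulting embedded transition.\<close>
definition epi_step :: "'v set \<Rightarrow> ('v \<Rightarrow> 'v \<Rightarrow> bool) \<Rightarrow> real \<Rightarrow> real \<Rightarrow>
    'v \<times> 'v \<times> bool \<times> bool \<Rightarrow> ('v \<times> 'v \<times> bool \<times> bool) pmf" where
  "epi_step V E lam gam s = (case s of (x, y, ix, iy) \<Rightarrow>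
     bind_pmf (bernoulli_pmf (lam / (lam + gam))) (\<lambda>jump.
     bind_pmf (bernoulli_pmf (1/2)) (\<lambda>who.
       map_pmf infect
         (if jump then
            (if who then map_pmf (\<lambda>x'. (x', y, ix, iy)) (walk_step V E x)
                    else map_pmf (\<lambda>y'. (x, y', ix, iy)) (walk_step V E y))
          else return_pmf (if who then (x, y, False, iy) else (x, y, ix, False))))))"

definition both_susceptible :: "'v \<times> 'v \<times> bool \<times> bool \<Rightarrow> bool" where
  "both_susceptible s = (case s of (x, y, ix, iy) \<Rightarrow> \<not> ix \<and> \<not> iy)"

definition end_cdf :: "'v set \<Rightarrow> ('v \<Rightarrow> 'v \<Rightarrow> bool) \<Rightarrow> real \<Rightarrow> real \<Rightarrow> 'v \<Rightarrow> real \<Rightarrow> real" where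
  "end_cdf V E lam gam v0 t =
     (if t < 0 then 0 else
        (\<Sum>k. exp (- (2 * (lam + gam) * t)) * (2 * (lam + gam) * t) ^ k / fact k
             * hit_within (epi_step V E lam gam) both_susceptible k (v0, v0, True, True)))"

definition exp_cdf :: "real \<Rightarrow> real \<Rightarrow> real" where
  "exp_cdf mu x = (if x < 0 then 0 else 1 - exp (- mu * x))"

end

theory Submission
  imports Defs "HOL-Real_Asymp.Real_Asymp"
begin

(* On K_{a,b}, a jump of the pair made while the walkers sit in opposite parts meets with
   probability mu = (1/a + 1/b)/2 and otherwise leaves both walkers in one part, from where the
   next jump always returns them to opposite parts.  Hence P(N > k) = (1 - mu)^ceil(k/2), and
   mu ~ 1/(2m) gives the Exp(1/4) limit of N/m.

   For the epidemic, the embedded chain lumps exactly onto six states (agents together; both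
   infected in opposite parts or in one part; one infected in opposite parts or in one part;
   both susceptible).  With q = gam/(lam+gam) and r = t q^2/mu, the lumped kernel has an explicit
   vector w, uniformly close to 1, that satisfies the eigen-equation with eigenvalue 1 - r in every
   state but one, where the defect has the sign of t - 1.  Comparison with w bounds the
   probability of survival through k events below by (1 - o(1)) (1 - r)^k if t > 1 and above by
   (1 + o(1)) (1 - r)^k if t < 1, and averaging over the Poisson(2 (lam+gam) tau) number of events
   gives P(T > tau) -> exp(-x) when 2 (lam+gam) tau q^2/mu -> x, i.e. tau = x lam/(4 m gam^2). *)

section \<open>Jump kernels on the complete bipartite graph\<close>

lemma expectation_bind_pmf_bounded:
  fixes f :: "'b \<Rightarrow> real"
  assumes "\<And>x. \<bar>f x\<bar> \<le> B"
  shows "measure_pmf.expectation (bind_pmf M N) f =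
         measure_pmf.expectation M (\<lambda>x. measure_pmf.expectation (N x) f)"
  unfolding measure_pmf_bind
  by (rule integral_bind[where K="count_space UNIV" and B=B and B'=1])
     (use assms in \<open>auto simp: measure_pmf_in_subprob_space
        intro!: measurable_pmf_measure1 measure_pmf.finite_measure_axioms\<close>)

lemma hit_within_bounds: "0 \<le> hit_within K A k s \<and> hit_within K A k s \<le> 1"
proof (induction k arbitrary: s)
  case 0
  then show ?case by simp
next
  case (Suc k)
  have int: "integrable (measure_pmf (K s)) (hit_within K A k)"
    by (rule measure_pmf.integrable_const_bound[where B=1]) (use Suc in auto)
  have "0 \<le> measure_pmf.expectation (K s) (hit_within K A k)"
    by (rule measure_pmf.integral_ge_const[OF int]) (use Suc in auto)
  moreover have "measure_pmf.expectation (K s) (hit_within K A k) \<le> 1"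
    by (rule measure_pmf.integral_le_const[OF int]) (use Suc in auto)
  ultimately show ?case by simp
qed

lemma abs_hit_within_le_1: "\<bar>hit_within K A k s\<bar> \<le> 1"
  using hit_within_bounds[of K A k s] by (simp add: abs_le_iff)

lemma expectation_pair_step:
  fixes G :: "'v \<times> 'v \<Rightarrow> real"
  assumes "\<And>s. \<bar>G s\<bar> \<le> B"
  shows "measure_pmf.expectation (pair_step V E (x, y)) G =
    (measure_pmf.expectation (walk_step V E x) (\<lambda>x'. G (x', y))
     + measure_pmf.expectation (walk_step V E y) (\<lambda>y'. G (x, y'))) / 2"
  unfolding pair_step_def
  by (subst expectation_bind_pmf_bounded[where B=B]) (use assms in \<open>simp_all add: field_simps\<close>)

lemma expectation_epi_step:
  fixes G :: "'v \<times> 'v \<times> bool \<times> bool \<Rightarrow> real"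
  assumes bdd: "\<And>s. \<bar>G s\<bar> \<le> B" and "0 \<le> lam / (lam + gam)" "lam / (lam + gam) \<le> 1"
  shows "measure_pmf.expectation (epi_step V E lam gam (x, y, ix, iy)) G =
    lam / (lam + gam) *
      (1/2 * measure_pmf.expectation (walk_step V E x) (\<lambda>x'. G (infect (x', y, ix, iy)))
       + 1/2 * measure_pmf.expectation (walk_step V E y) (\<lambda>y'. G (infect (x, y', ix, iy))))
  + (1 - lam / (lam + gam)) * (1/2 * G (infect (x, y, False, iy)) + 1/2 * G (infect (x, y, ix, False)))"
  unfolding epi_step_def prod.case
  apply (subst expectation_bind_pmf_bounded[where B=B], rule bdd)
  apply (simp add: assms(2,3))
  apply (subst expectation_bind_pmf_bounded[where B=B], rule bdd)+
  apply (simp add: algebra_simps)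
  done

definition bip_part :: "nat \<Rightarrow> nat \<Rightarrow> bool \<Rightarrow> (bool \<times> nat) set" where
  "bip_part a b c = {w \<in> bip_V a b. fst w = c}"

lemma mem_bip_part: "w \<in> bip_part a b c \<longleftrightarrow> w \<in> bip_V a b \<and> fst w = c"
  by (simp add: bip_part_def)

lemma nbrs_bip: "nbrs (bip_V a b) bip_E x = bip_part a b (\<not> fst x)"
  unfolding nbrs_def bip_part_def bip_E_def by auto

lemma bip_part_eq: "bip_part a b c = (if c then Pair True ` {..<b} else Pair False ` {..<a})"
  unfolding bip_part_def bip_V_def by auto

lemma finite_bip_part: "finite (bip_part a b c)"
  by (simp add: bip_part_eq)

lemma card_bip_part: "card (bip_part a b c) = (if c then b else a)"
  by (simp add: bip_part_eq card_image inj_on_def)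

lemma bip_part_nonempty: "1 \<le> a \<Longrightarrow> 1 \<le> b \<Longrightarrow> bip_part a b c \<noteq> {}"
  using card_bip_part[of a b c] by (cases c) auto

lemma inverse_card_bip_part_sum:
  "1 / real (card (bip_part a b c)) + 1 / real (card (bip_part a b (\<not> c))) = 1 / a + 1 / b"
  by (cases c) (simp_all add: card_bip_part)

lemma bip_meet_rate_bounds:
  assumes "1 \<le> a" "1 \<le> b"
  shows "0 < (1 / real a + 1 / real b) / 2 \<and> (1 / real a + 1 / real b) / 2 \<le> 1"
proof -
  have mean: "0 < (u + v) / 2 \<and> (u + v) / 2 \<le> 1" if "0 < u" "u \<le> 1" "0 < v" "v \<le> 1" for u v :: real
    using that by simp
  show ?thesis
    by (rule mean) (use assms in auto)
qed

lemma bip_adjacent_part_sizes: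
  "u \<in> bip_V a b \<Longrightarrow> v \<in> bip_V a b \<Longrightarrow> bip_E u v \<Longrightarrow> 1 \<le> a \<and> 1 \<le> b"
  by (auto simp: bip_V_def bip_E_def)

lemma expectation_walk_step_bip:
  assumes "1 \<le> a" "1 \<le> b"
  shows "measure_pmf.expectation (walk_step (bip_V a b) bip_E x) f =
         (\<Sum>w\<in>bip_part a b (\<not> fst x). f w) / card (bip_part a b (\<not> fst x))"
  unfolding walk_step_def nbrs_bip
  by (rule integral_pmf_of_set) (use finite_bip_part bip_part_nonempty[OF assms] in auto)

lemma average_const:
  assumes "finite N" "N \<noteq> {}" "\<And>w. w \<in> N \<Longrightarrow> f w = c"
  shows "(\<Sum>w\<in>N. f w) / card N = (c::real)"
  using assms by (simp add: card_gt_0_iff)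

lemma average_remove:
  assumes "finite N" "y \<in> N" "\<And>w. w \<in> N \<Longrightarrow> w \<noteq> y \<Longrightarrow> f w = c"
  shows "(\<Sum>w\<in>N. f w) / card N = f y / card N + (1 - 1 / card N) * (c::real)"
proof -
  have pos: "card N > 0" using assms by (auto simp: card_gt_0_iff)
  have "(\<Sum>w\<in>N. f w) = f y + (\<Sum>w\<in>N-{y}. f w)" using assms by (simp add: sum.remove)
  also have "(\<Sum>w\<in>N-{y}. f w) = (real (card N) - 1) * c"
    using assms pos by (simp add: card_Diff_singleton of_nat_diff)
  finally show ?thesis using pos by (simp add: field_simps)
qed

section \<open>Meeting of two walkers\<close>

(* Of k jumps started from opposite parts, (k + 1) div 2 are attempts to meet, each successful
   with probability mu. *)
definition meet_prob :: "real \<Rightarrow> nat \<Rightarrow> bool \<times> nat \<Rightarrow> bool \<times> nat \<Rightarrow> real" where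
  "meet_prob mu k x y =
     (if x = y then 1
      else if fst x \<noteq> fst y then 1 - (1 - mu) ^ ((k + 1) div 2)
      else 1 - (1 - mu) ^ (k div 2))"

lemma meet_prob_commute: "meet_prob mu k x y = meet_prob mu k y x"
  by (auto simp: meet_prob_def)

lemma average_meet_prob:
  assumes "x \<in> bip_V a b" "y \<in> bip_V a b" "x \<noteq> y" "1 \<le> a" "1 \<le> b"
  shows "(\<Sum>w\<in>bip_part a b (\<not> fst x). meet_prob mu k w y) / card (bip_part a b (\<not> fst x)) =
    (if fst x \<noteq> fst y
     then 1 / card (bip_part a b (fst y))
          + (1 - 1 / card (bip_part a b (fst y))) * (1 - (1 - mu) ^ (k div 2))
     else 1 - (1 - mu) ^ ((k + 1) div 2))"
proof (cases "fst x \<noteq> fst y")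
  case True
  then have part: "bip_part a b (\<not> fst x) = bip_part a b (fst y)" by auto
  have "(\<Sum>w\<in>bip_part a b (fst y). meet_prob mu k w y) / card (bip_part a b (fst y)) =
     meet_prob mu k y y / card (bip_part a b (fst y))
     + (1 - 1 / card (bip_part a b (fst y))) * (1 - (1 - mu) ^ (k div 2))"
    by (rule average_remove) (use assms in \<open>auto simp: finite_bip_part mem_bip_part meet_prob_def\<close>)
  then show ?thesis using True by (simp add: part meet_prob_def)
next
  case False
  then show ?thesis
    using assms by (subst average_const[where c="1 - (1 - mu) ^ ((k + 1) div 2)"])
      (auto simp: finite_bip_part bip_part_nonempty mem_bip_part meet_prob_def)
qed

lemma hit_within_meet_bip:
  assumes "1 \<le> a" "1 \<le> b" "x \<in> bip_V a b" "y \<in> bip_V a b"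
  shows "hit_within (pair_step (bip_V a b) bip_E) (\<lambda>p. fst p = snd p) k (x, y) =
         meet_prob ((1 / a + 1 / b) / 2) k x y"
  using assms(3,4)
proof (induction k arbitrary: x y)
  case 0
  then show ?case by (simp add: meet_prob_def)
next
  case (Suc k)
  let ?mu = "(1 / a + 1 / b) / 2" and ?K = "pair_step (bip_V a b) bip_E"
  let ?H = "hit_within ?K (\<lambda>p. fst p = snd p) k"
  let ?avg = "\<lambda>x y. (\<Sum>w\<in>bip_part a b (\<not> fst x). meet_prob ?mu k w y) / card (bip_part a b (\<not> fst x))"
  show ?case
  proof (cases "x = y")
    case True
    then show ?thesis by (simp add: meet_prob_def)
  next
    case xy: False
    have sum_x: "(\<Sum>w\<in>bip_part a b (\<not> fst x). ?H (w, y)) = (\<Sum>w\<in>bip_part a b (\<not> fst x). meet_prob ?mu k w y)"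
      by (rule sum.cong) (auto simp: mem_bip_part intro!: Suc.IH Suc.prems)
    have sum_y: "(\<Sum>w\<in>bip_part a b (\<not> fst y). ?H (x, w)) = (\<Sum>w\<in>bip_part a b (\<not> fst y). meet_prob ?mu k w x)"
      by (rule sum.cong) (auto simp: mem_bip_part meet_prob_commute intro!: Suc.IH Suc.prems)
    have "hit_within ?K (\<lambda>p. fst p = snd p) (Suc k) (x, y) = (?avg x y + ?avg y x) / 2"
      using xy by (simp add: expectation_pair_step[where B=1] abs_hit_within_le_1
          expectation_walk_step_bip[OF assms(1,2)] sum_x sum_y)
    also have "\<dots> = meet_prob ?mu (Suc k) x y"
    proof (cases "fst x \<noteq> fst y")
      case True
      let ?c = "1 - (1 - ?mu) ^ (k div 2)"
      let ?ix = "1 / real (card (bip_part a b (fst x)))" and ?iy = "1 / real (card (bip_part a b (fst y)))"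
      have "?avg x y = ?iy + (1 - ?iy) * ?c"
        using average_meet_prob[OF Suc.prems xy assms(1,2)] True by simp
      moreover have "?avg y x = ?ix + (1 - ?ix) * ?c"
        using average_meet_prob[OF Suc.prems(2,1) not_sym[OF xy] assms(1,2)] True by simp
      moreover have "?ix + ?iy = 1 / a + 1 / b"
        using inverse_card_bip_part_sum[of a b "fst x"] True by (cases "fst y") auto
      moreover have "(iy + (1 - iy) * c + (ix + (1 - ix) * c)) / 2 = 1 - (1 - (ix + iy) / 2) * (1 - c)"
        for ix iy c :: real
        by (simp add: field_simps)
      ultimately show ?thesis
        using True xy by (simp add: meet_prob_def)
    next
      case False
      then show ?thesis
        using average_meet_prob[OF Suc.prems xy assms(1,2)]
          average_meet_prob[OF Suc.prems(2,1) not_sym[OF xy] assms(1,2)] xy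
        by (simp add: meet_prob_def)
    qed
    finally show ?thesis .
  qed
qed

lemma tendsto_power_one_minus:
  fixes mu :: "nat \<Rightarrow> real" and j :: "nat \<Rightarrow> nat"
  assumes mu: "mu \<longlonglongrightarrow> 0" "\<forall>\<^sub>F n in sequentially. 0 < mu n"
    and j: "(\<lambda>n. j n * mu n) \<longlonglongrightarrow> c"
  shows "(\<lambda>n. (1 - mu n) ^ j n) \<longlonglongrightarrow> exp (- c)"
proof -
  have "((\<lambda>z::real. ln (1 - z) / z) \<longlongrightarrow> -1) (at_right 0)"
    by real_asymp
  moreover have "filterlim mu (at_right 0) sequentially"
    using mu by (rule tendsto_imp_filterlim_at_right)
  ultimately have "(\<lambda>n. ln (1 - mu n) / mu n) \<longlonglongrightarrow> -1"
    by (rule filterlim_compose)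
  then have "(\<lambda>n. exp (j n * mu n * (ln (1 - mu n) / mu n))) \<longlonglongrightarrow> exp (c * -1)"
    by (intro tendsto_intros j)
  moreover have "\<forall>\<^sub>F n in sequentially. mu n < 1"
    using mu(1) by (rule order_tendstoD) simp
  with mu(2) have "\<forall>\<^sub>F n in sequentially. exp (j n * mu n * (ln (1 - mu n) / mu n)) = (1 - mu n) ^ j n"
  proof eventually_elim
    case (elim n)
    then have "exp (j n * mu n * (ln (1 - mu n) / mu n)) = exp (ln ((1 - mu n) ^ j n))"
      by (simp add: ln_realpow)
    also have "\<dots> = (1 - mu n) ^ j n"
      using elim by simp
    finally show ?case .
  qed
  ultimately show ?thesis by (simp add: Lim_transform_eventually)
qed

lemma half_ceiling_floor_scaled:
  fixes s :: "nat \<Rightarrow> real"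
  assumes s: "filterlim s at_top sequentially" and "0 \<le> x"
  shows "(\<lambda>n. real ((nat \<lfloor>s n * x\<rfloor> + 1) div 2) / s n) \<longlonglongrightarrow> x / 2"
proof (rule tendsto_sandwich[where f="\<lambda>n. x / 2 - inverse (s n) / 2" and h="\<lambda>n. x / 2 + inverse (s n) / 2"])
  have inv: "(\<lambda>n. inverse (s n)) \<longlonglongrightarrow> 0"
    using s by (rule tendsto_inverse_0_at_top)
  have "(\<lambda>n. x / 2 - inverse (s n) / 2) \<longlonglongrightarrow> x / 2 - 0 / 2"
    by (intro tendsto_intros inv) simp
  moreover have "(\<lambda>n. x / 2 + inverse (s n) / 2) \<longlonglongrightarrow> x / 2 + 0 / 2"
    by (intro tendsto_intros inv) simp
  ultimately show "(\<lambda>n. x / 2 - inverse (s n) / 2) \<longlonglongrightarrow> x / 2" "(\<lambda>n. x / 2 + inverse (s n) / 2) \<longlonglongrightarrow> x / 2"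
    by simp_all
  have bounds: "y - 1 \<le> 2 * real ((nat \<lfloor>y\<rfloor> + 1) div 2) \<and> 2 * real ((nat \<lfloor>y\<rfloor> + 1) div 2) \<le> y + 1"
    if "0 \<le> y" for y :: real
  proof -
    define f where "f = nat \<lfloor>y\<rfloor>"
    have "f \<le> 2 * ((f + 1) div 2)" "2 * ((f + 1) div 2) \<le> f + 1"
      by presburger+
    then have "real f \<le> 2 * real ((f + 1) div 2)" "2 * real ((f + 1) div 2) \<le> real f + 1"
      by linarith+
    moreover have "y - 1 < real f" "real f \<le> y"
      unfolding f_def using that by linarith+
    ultimately show ?thesis
      unfolding f_def by linarith
  qed
  have pos: "\<forall>\<^sub>F n in sequentially. 0 < s n"
    using s by (simp add: filterlim_at_top_dense)
  show "\<forall>\<^sub>F n in sequentially. x / 2 - inverse (s n) / 2 \<le> real ((nat \<lfloor>s n * x\<rfloor> + 1) div 2) / s n"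
    using pos
  proof eventually_elim
    case (elim n)
    have "x / 2 - inverse (s n) / 2 = (s n * x - 1) / (2 * s n)"
      using elim by (simp add: field_simps)
    also have "\<dots> \<le> (2 * real ((nat \<lfloor>s n * x\<rfloor> + 1) div 2)) / (2 * s n)"
      using bounds[of "s n * x"] elim \<open>0 \<le> x\<close> by (intro divide_right_mono) simp_all
    finally show ?case by simp
  qed
  show "\<forall>\<^sub>F n in sequentially. real ((nat \<lfloor>s n * x\<rfloor> + 1) div 2) / s n \<le> x / 2 + inverse (s n) / 2"
    using pos
  proof eventually_elim
    case (elim n)
    have "real ((nat \<lfloor>s n * x\<rfloor> + 1) div 2) / s n = (2 * real ((nat \<lfloor>s n * x\<rfloor> + 1) div 2)) / (2 * s n)"
      by simp
    also have "\<dots> \<le> (s n * x + 1) / (2 * s n)"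
      using bounds[of "s n * x"] elim \<open>0 \<le> x\<close> by (intro divide_right_mono) simp_all
    also have "\<dots> = x / 2 + inverse (s n) / 2"
      using elim by (simp add: field_simps)
    finally show ?case .
  qed
qed

lemma meet_cdf_bip_tendsto:
  fixes a b :: "nat \<Rightarrow> nat" and u v :: "nat \<Rightarrow> bool \<times> nat" and s :: "nat \<Rightarrow> real"
  assumes edge: "\<forall>\<^sub>F n in sequentially.
      u n \<in> bip_V (a n) (b n) \<and> v n \<in> bip_V (a n) (b n) \<and> bip_E (u n) (v n)"
    and s: "filterlim s at_top sequentially"
    and rate: "(\<lambda>n. s n * ((1 / a n + 1 / b n) / 2)) \<longlonglongrightarrow> c"
    and x: "0 \<le> x"
  shows "(\<lambda>n. meet_cdf (bip_V (a n) (b n)) bip_E (u n) (v n) (s n * x)) \<longlonglongrightarrow> 1 - exp (- (c * x / 2))"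
proof -
  define mu where "mu n = (1 / real (a n) + 1 / real (b n)) / 2" for n
  define j where "j n = (nat \<lfloor>s n * x\<rfloor> + 1) div 2" for n
  have spos: "\<forall>\<^sub>F n in sequentially. 0 < s n"
    using s by (simp add: filterlim_at_top_dense)
  have good: "\<forall>\<^sub>F n in sequentially. 0 < s n \<and> 1 \<le> a n \<and> 1 \<le> b n \<and> fst (u n) \<noteq> fst (v n)
      \<and> u n \<in> bip_V (a n) (b n) \<and> v n \<in> bip_V (a n) (b n)"
    using spos edge by eventually_elim (auto dest: bip_adjacent_part_sizes simp: bip_E_def)
  have "(\<lambda>n. s n * mu n * inverse (s n)) \<longlonglongrightarrow> c * 0"
    unfolding mu_def by (intro tendsto_intros rate tendsto_inverse_0_at_top s)
  moreover have "\<forall>\<^sub>F n in sequentially. s n * mu n * inverse (s n) = mu n"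
    using spos by eventually_elim simp
  ultimately have mu0: "mu \<longlonglongrightarrow> 0"
    by (simp add: Lim_transform_eventually)
  have mu_pos: "\<forall>\<^sub>F n in sequentially. 0 < mu n"
    using good by eventually_elim (auto simp: mu_def intro!: add_pos_pos)
  have "(\<lambda>n. real (j n) / s n * (s n * mu n)) \<longlonglongrightarrow> x / 2 * c"
    unfolding j_def mu_def by (intro tendsto_intros half_ceiling_floor_scaled s x rate)
  moreover have "\<forall>\<^sub>F n in sequentially. real (j n) / s n * (s n * mu n) = real (j n) * mu n"
    using spos by eventually_elim simp
  ultimately have "(\<lambda>n. real (j n) * mu n) \<longlonglongrightarrow> c * x / 2"
    by (simp add: Lim_transform_eventually mult.commute)
  then have "(\<lambda>n. 1 - (1 - mu n) ^ j n) \<longlonglongrightarrow> 1 - exp (- (c * x / 2))"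
    by (intro tendsto_intros tendsto_power_one_minus[OF mu0 mu_pos])
  moreover have "\<forall>\<^sub>F n in sequentially.
      1 - (1 - mu n) ^ j n = meet_cdf (bip_V (a n) (b n)) bip_E (u n) (v n) (s n * x)"
    using good
  proof eventually_elim
    case (elim n)
    then have "u n \<noteq> v n" by auto
    with elim x show ?case
      by (simp add: meet_cdf_def hit_within_meet_bip meet_prob_def mu_def j_def)
  qed
  ultimately show ?thesis
    by (rule Lim_transform_eventually)
qed

section \<open>The lumped epidemic chain\<close>

(* Together: both agents on one vertex (then both are infected); Both/One: number of infected
   agents, with the agents in opposite parts (opp) or on distinct vertices of one part (same);
   Ended: both susceptible.  In lumped_exp, p is the probability that an event is a jump and mu
   the probability that a jump between opposite parts makes the agents meet. *)
datatype lstate = Together | Both_opp | Both_same | One_opp | One_same | Ended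

fun lumped_exp :: "real \<Rightarrow> real \<Rightarrow> lstate \<Rightarrow> (lstate \<Rightarrow> real) \<Rightarrow> real" where
  "lumped_exp p mu Together g = (1 - p) * g Together + p * g Both_opp"
| "lumped_exp p mu Both_opp g = p * mu * g Together + p * (1 - mu) * g Both_same + (1 - p) * g One_opp"
| "lumped_exp p mu Both_same g = p * g Both_opp + (1 - p) * g One_same"
| "lumped_exp p mu One_opp g =
     p * mu * g Together + p * (1 - mu) * g One_same + (1 - p) / 2 * g One_opp + (1 - p) / 2 * g Ended"
| "lumped_exp p mu One_same g = p * g One_opp + (1 - p) / 2 * g One_same + (1 - p) / 2 * g Ended"
| "lumped_exp p mu Ended g = g Ended"

fun lumped_survival :: "real \<Rightarrow> real \<Rightarrow> nat \<Rightarrow> lstate \<Rightarrow> real" where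
  "lumped_survival p mu 0 s = (if s = Ended then 0 else 1)"
| "lumped_survival p mu (Suc k) s = (if s = Ended then 0 else lumped_exp p mu s (lumped_survival p mu k))"

lemma lumped_exp_mono:
  assumes "0 \<le> p" "p \<le> 1" "0 \<le> mu" "mu \<le> 1" "\<And>s. g s \<le> h s"
  shows "lumped_exp p mu s g \<le> lumped_exp p mu s h"
  using assms by (cases s) (auto intro!: add_mono mult_left_mono)

lemma lumped_exp_cmult: "lumped_exp p mu s (\<lambda>s'. c * g s') = c * lumped_exp p mu s g"
  by (cases s) (auto simp: algebra_simps)

lemma lumped_exp_one_minus: "lumped_exp p mu s (\<lambda>s'. 1 - g s') = 1 - lumped_exp p mu s g"
  by (cases s) (simp_all add: field_simps)

lemma lumped_survival_bounds:
  assumes "0 \<le> p" "p \<le> 1" "0 \<le> mu" "mu \<le> 1"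
  shows "0 \<le> lumped_survival p mu k s \<and> lumped_survival p mu k s \<le> 1"
proof (induction k arbitrary: s)
  case 0
  then show ?case by auto
next
  case (Suc k)
  have "lumped_exp p mu s (\<lambda>_. 0) \<le> lumped_exp p mu s (lumped_survival p mu k)"
    and "lumped_exp p mu s (lumped_survival p mu k) \<le> lumped_exp p mu s (\<lambda>_. 1)"
    by (rule lumped_exp_mono; use assms Suc in auto)+
  moreover have "lumped_exp p mu s (\<lambda>_. 0) = 0" "s \<noteq> Ended \<Longrightarrow> lumped_exp p mu s (\<lambda>_. 1) = 1"
    by (cases s; simp add: algebra_simps)+
  ultimately show ?case by auto
qed

lemma lumped_survival_ge:
  assumes "0 \<le> p" "p \<le> 1" "0 \<le> mu" "mu \<le> 1" "0 \<le> \<alpha>" "0 \<le> W"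
    and "w Ended = 0" "\<And>s. s \<noteq> Ended \<Longrightarrow> w s \<le> W"
    and "\<And>s. s \<noteq> Ended \<Longrightarrow> \<alpha> * w s \<le> lumped_exp p mu s w"
  shows "\<alpha> ^ k * w s \<le> W * lumped_survival p mu k s"
proof (induction k arbitrary: s)
  case 0
  then show ?case using assms by auto
next
  case (Suc k)
  show ?case
  proof (cases "s = Ended")
    case True
    then show ?thesis using assms by simp
  next
    case False
    have "\<alpha> ^ Suc k * w s = \<alpha> ^ k * (\<alpha> * w s)" by simp
    also have "\<dots> \<le> \<alpha> ^ k * lumped_exp p mu s w"
      using assms False by (intro mult_left_mono) auto
    also have "\<dots> = lumped_exp p mu s (\<lambda>s'. \<alpha> ^ k * w s')"
      by (simp add: lumped_exp_cmult)
    also have "\<dots> \<le> lumped_exp p mu s (\<lambda>s'. W * lumped_survival p mu k s')"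
      by (rule lumped_exp_mono) (use assms Suc in auto)
    also have "\<dots> = W * lumped_survival p mu (Suc k) s"
      using False by (simp add: lumped_exp_cmult)
    finally show ?thesis .
  qed
qed

lemma lumped_survival_le:
  assumes "0 \<le> p" "p \<le> 1" "0 \<le> mu" "mu \<le> 1" "0 \<le> \<beta>" "0 \<le> L"
    and "\<And>s. 0 \<le> w s" "\<And>s. s \<noteq> Ended \<Longrightarrow> L \<le> w s"
    and "\<And>s. s \<noteq> Ended \<Longrightarrow> lumped_exp p mu s w \<le> \<beta> * w s"
  shows "L * lumped_survival p mu k s \<le> \<beta> ^ k * w s"
proof (induction k arbitrary: s)
  case 0
  then show ?case using assms by auto
next
  case (Suc k)
  show ?case
  proof (cases "s = Ended")
    case True
    then show ?thesis using assms by simp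
  next
    case False
    have "L * lumped_survival p mu (Suc k) s = lumped_exp p mu s (\<lambda>s'. L * lumped_survival p mu k s')"
      using False by (simp add: lumped_exp_cmult)
    also have "\<dots> \<le> lumped_exp p mu s (\<lambda>s'. \<beta> ^ k * w s')"
      by (rule lumped_exp_mono) (use assms Suc in auto)
    also have "\<dots> = \<beta> ^ k * lumped_exp p mu s w"
      by (simp add: lumped_exp_cmult)
    also have "\<dots> \<le> \<beta> ^ k * (\<beta> * w s)"
      using assms False by (intro mult_left_mono) auto
    also have "\<dots> = \<beta> ^ Suc k * w s" by simp
    finally show ?thesis .
  qed
qed

definition lump :: "(bool \<times> nat) \<times> (bool \<times> nat) \<times> bool \<times> bool \<Rightarrow> lstate" where
  "lump s = (case s of (x, y, ix, iy) \<Rightarrow>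
     if \<not> ix \<and> \<not> iy then Ended
     else if x = y then Together
     else if ix \<and> iy then (if fst x \<noteq> fst y then Both_opp else Both_same)
     else (if fst x \<noteq> fst y then One_opp else One_same))"

definition valid_epi_state :: "nat \<Rightarrow> nat \<Rightarrow> (bool \<times> nat) \<times> (bool \<times> nat) \<times> bool \<times> bool \<Rightarrow> bool" where
  "valid_epi_state a b s = (case s of (x, y, ix, iy) \<Rightarrow>
     x \<in> bip_V a b \<and> y \<in> bip_V a b \<and> (x = y \<longrightarrow> ix = iy))"

lemma lump_eq_Ended_iff: "lump s = Ended \<longleftrightarrow> both_susceptible s"
  by (cases s) (auto simp: lump_def both_susceptible_def)

lemma lump_infect_swap: "lump (infect (x, y, ix, iy)) = lump (infect (y, x, iy, ix))"
  by (auto simp: lump_def infect_def)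

lemma valid_epi_state_infect:
  "x \<in> bip_V a b \<Longrightarrow> y \<in> bip_V a b \<Longrightarrow> valid_epi_state a b (infect (x, y, ix, iy))"
  by (auto simp: valid_epi_state_def infect_def)

lemma average_lump_move:
  assumes "x \<in> bip_V a b" "y \<in> bip_V a b" "x = y \<longrightarrow> ix = iy" "ix \<or> iy" "1 \<le> a" "1 \<le> b"
  shows "(\<Sum>w\<in>bip_part a b (\<not> fst x). g (lump (infect (w, y, ix, iy)))) / card (bip_part a b (\<not> fst x)) =
    (if x = y then g Both_opp
     else if fst x \<noteq> fst y
     then g Together / card (bip_part a b (fst y))
          + (1 - 1 / card (bip_part a b (fst y))) * g (if ix \<and> iy then Both_same else One_same)
     else g (if ix \<and> iy then Both_opp else One_opp))"
proof (cases "x = y")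
  case True
  then show ?thesis
    using assms by (subst average_const[where c="g Both_opp"])
      (auto simp: finite_bip_part mem_bip_part infect_def lump_def bip_part_nonempty)
next
  case False
  show ?thesis
  proof (cases "fst x \<noteq> fst y")
    case True
    then have part: "bip_part a b (\<not> fst x) = bip_part a b (fst y)" by auto
    have "y \<in> bip_part a b (fst y)"
      using assms by (simp add: mem_bip_part)
    then show ?thesis
      unfolding part using False True assms
      by (subst average_remove[where y=y and c="g (if ix \<and> iy then Both_same else One_same)"])
        (auto simp: finite_bip_part mem_bip_part infect_def lump_def)
  next
    case False2: False
    show ?thesis
      using False False2 assms
      by (subst average_const[where c="g (if ix \<and> iy then Both_opp else One_opp)"])
        (auto simp: finite_bip_part mem_bip_part infect_def lump_def bip_part_nonempty)
  qed
qed

lemma lumped_exp_lump: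
  assumes "valid_epi_state a b (x, y, ix, iy)" "\<not> both_susceptible (x, y, ix, iy)" "1 \<le> a" "1 \<le> b"
  shows "p * (1/2 * ((\<Sum>w\<in>bip_part a b (\<not> fst x). g (lump (infect (w, y, ix, iy)))) / card (bip_part a b (\<not> fst x)))
             + 1/2 * ((\<Sum>w\<in>bip_part a b (\<not> fst y). g (lump (infect (x, w, ix, iy)))) / card (bip_part a b (\<not> fst y))))
       + (1 - p) * (1/2 * g (lump (infect (x, y, False, iy))) + 1/2 * g (lump (infect (x, y, ix, False))))
       = lumped_exp p ((1 / a + 1 / b) / 2) (lump (x, y, ix, iy)) g"
    (is "p * ?walk + (1 - p) * ?recover = _")
proof -
  let ?mu = "(1 / a + 1 / b) / 2" and ?Z = "if ix \<and> iy then Both_same else One_same"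
  have xy: "x \<in> bip_V a b" "y \<in> bip_V a b" "x = y \<longrightarrow> ix = iy" and inf: "ix \<or> iy"
    using assms(1,2) by (auto simp: valid_epi_state_def both_susceptible_def)
  have swap: "(\<Sum>w\<in>bip_part a b (\<not> fst y). g (lump (infect (x, w, ix, iy))))
      = (\<Sum>w\<in>bip_part a b (\<not> fst y). g (lump (infect (w, x, iy, ix))))"
    by (simp add: lump_infect_swap)
  have mx: "(\<Sum>w\<in>bip_part a b (\<not> fst x). g (lump (infect (w, y, ix, iy)))) / card (bip_part a b (\<not> fst x)) =
    (if x = y then g Both_opp
     else if fst x \<noteq> fst y
     then g Together / card (bip_part a b (fst y)) + (1 - 1 / card (bip_part a b (fst y))) * g ?Z
     else g (if ix \<and> iy then Both_opp else One_opp))"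
    by (rule average_lump_move[OF xy inf assms(3,4)])
  have my: "(\<Sum>w\<in>bip_part a b (\<not> fst y). g (lump (infect (x, w, ix, iy)))) / card (bip_part a b (\<not> fst y)) =
    (if y = x then g Both_opp
     else if fst y \<noteq> fst x
     then g Together / card (bip_part a b (fst x)) + (1 - 1 / card (bip_part a b (fst x))) * g (if iy \<and> ix then Both_same else One_same)
     else g (if iy \<and> ix then Both_opp else One_opp))"
    unfolding swap by (rule average_lump_move) (use xy inf assms(3,4) in auto)
  show ?thesis
  proof (cases "x = y")
    case True
    with xy(3) inf have "ix" "iy" by auto
    have walk: "?walk = g Both_opp"
      unfolding mx my using True by simp
    show ?thesis
      unfolding walk using True \<open>ix\<close> \<open>iy\<close> by (simp add: lump_def infect_def algebra_simps)
  next
    case False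
    show ?thesis
    proof (cases "fst x = fst y")
      case True
      have walk: "?walk = g (if ix \<and> iy then Both_opp else One_opp)"
        unfolding mx my using True False by (simp add: conj_commute)
      show ?thesis
        unfolding walk using True False inf
        by (cases ix; cases iy) (simp_all add: lump_def infect_def algebra_simps)
    next
      case opp: False
      let ?ix = "1 / real (card (bip_part a b (fst x)))" and ?iy = "1 / real (card (bip_part a b (fst y)))"
      have inv_sum: "?ix + ?iy = 1 / a + 1 / b"
        using inverse_card_bip_part_sum[of a b "fst x"] opp by (cases "fst y") auto
      have avg: "1/2 * (gT * v + (1 - v) * gZ) + 1/2 * (gT * u + (1 - u) * gZ)
          = (u + v) / 2 * gT + (1 - (u + v) / 2) * gZ" for u v gT gZ :: real
        by argo
      have "?walk = 1/2 * (g Together * ?iy + (1 - ?iy) * g ?Z) + 1/2 * (g Together * ?ix + (1 - ?ix) * g ?Z)"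
        unfolding mx my using False opp by (simp add: conj_commute)
      also have "\<dots> = ?mu * g Together + (1 - ?mu) * g ?Z"
        unfolding avg inv_sum ..
      finally have walk: "?walk = ?mu * g Together + (1 - ?mu) * g ?Z" .
      show ?thesis
        unfolding walk using False opp inf
        by (cases ix; cases iy) (simp_all add: lump_def infect_def algebra_simps)
    qed
  qed
qed

lemma hit_within_epi_bip:
  fixes lam gam :: real
  assumes "1 \<le> a" "1 \<le> b" "0 \<le> lam / (lam + gam)" "lam / (lam + gam) \<le> 1"
    and "valid_epi_state a b s"
  shows "hit_within (epi_step (bip_V a b) bip_E lam gam) both_susceptible k s
      = 1 - lumped_survival (lam / (lam + gam)) ((1 / a + 1 / b) / 2) k (lump s)"
  using assms(5)
proof (induction k arbitrary: s)
  case 0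
  then show ?case using lump_eq_Ended_iff[of s] by simp
next
  case (Suc k)
  let ?p = "lam / (lam + gam)" and ?mu = "(1 / a + 1 / b) / 2"
  let ?K = "epi_step (bip_V a b) bip_E lam gam"
  let ?H = "hit_within ?K both_susceptible k"
  let ?G = "\<lambda>s'. 1 - lumped_survival ?p ?mu k s'"
  obtain x y ix iy where s: "s = (x, y, ix, iy)" by (cases s) auto
  show ?case
  proof (cases "both_susceptible s")
    case True
    then show ?thesis using lump_eq_Ended_iff[of s] by simp
  next
    case alive: False
    have xy: "x \<in> bip_V a b" "y \<in> bip_V a b"
      using Suc.prems s by (auto simp: valid_epi_state_def)
    have IH: "?H (infect (x', y', jx, jy)) = ?G (lump (infect (x', y', jx, jy)))"
      if "x' \<in> bip_V a b" "y' \<in> bip_V a b" for x' y' jx jy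
      using Suc.IH[OF valid_epi_state_infect[OF that]] .
    have sum_x: "(\<Sum>w\<in>bip_part a b (\<not> fst x). ?H (infect (w, y, ix, iy)))
        = (\<Sum>w\<in>bip_part a b (\<not> fst x). ?G (lump (infect (w, y, ix, iy))))"
      by (rule sum.cong) (auto simp: mem_bip_part intro!: IH xy)
    have sum_y: "(\<Sum>w\<in>bip_part a b (\<not> fst y). ?H (infect (x, w, ix, iy)))
        = (\<Sum>w\<in>bip_part a b (\<not> fst y). ?G (lump (infect (x, w, ix, iy))))"
      by (rule sum.cong) (auto simp: mem_bip_part intro!: IH xy)
    have "hit_within ?K both_susceptible (Suc k) s = measure_pmf.expectation (?K s) ?H"
      using alive by simp
    also have "\<dots> = ?p * (1/2 * ((\<Sum>w\<in>bip_part a b (\<not> fst x). ?G (lump (infect (w, y, ix, iy)))) / card (bip_part a b (\<not> fst x)))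
             + 1/2 * ((\<Sum>w\<in>bip_part a b (\<not> fst y). ?G (lump (infect (x, w, ix, iy)))) / card (bip_part a b (\<not> fst y))))
       + (1 - ?p) * (1/2 * ?G (lump (infect (x, y, False, iy))) + 1/2 * ?G (lump (infect (x, y, ix, False))))"
      unfolding s
      by (simp add: expectation_epi_step[where B=1] abs_hit_within_le_1 assms(3,4)
          expectation_walk_step_bip[OF assms(1,2)] sum_x sum_y IH xy)
    also have "\<dots> = lumped_exp ?p ?mu (lump s) ?G"
      unfolding s by (rule lumped_exp_lump) (use Suc.prems alive s assms(1,2) in auto)
    also have "\<dots> = 1 - lumped_survival ?p ?mu (Suc k) (lump s)"
      using alive lump_eq_Ended_iff[of s] by (simp add: lumped_exp_one_minus)
    finally show ?thesis .
  qed
qed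

section \<open>An approximate eigenvector of the lumped chain\<close>

definition eig_s :: "real \<Rightarrow> real \<Rightarrow> real" where
  "eig_s p r = (1 + p) / 2 - r"

definition eig_e :: "real \<Rightarrow> real \<Rightarrow> real" where
  "eig_e p r = (1 - p) / 2 - r"

definition eig_det :: "real \<Rightarrow> real \<Rightarrow> real \<Rightarrow> real" where
  "eig_det p mu r = (eig_s p r)\<^sup>2 - p\<^sup>2 * (1 - mu)"

definition eig_c1 :: "real \<Rightarrow> real \<Rightarrow> real \<Rightarrow> real" where
  "eig_c1 p mu r = eig_e p r * (eig_s p r + p * (1 - mu)) / eig_det p mu r"

definition eig_c2 :: "real \<Rightarrow> real \<Rightarrow> real \<Rightarrow> real" where
  "eig_c2 p mu r = eig_e p r * (eig_s p r + p) / eig_det p mu r"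

(* Normalised by w Together = 1, the eigen-equation lumped_exp w = (1 - r) w at Together and at
   Both_same determines the entries at Both_opp and Both_same, and at One_opp, One_same it is a
   linear system for eig_c1, eig_c2 with determinant eig_det.  Only the equation at Both_opp is
   left over. *)
definition approx_eigvec :: "real \<Rightarrow> real \<Rightarrow> real \<Rightarrow> lstate \<Rightarrow> real" where
  "approx_eigvec p mu r s = (case s of
      Together \<Rightarrow> 1
    | Both_opp \<Rightarrow> 1 - r / p
    | Both_same \<Rightarrow> 1 - (1 - p) * eig_c2 p mu r / (1 - r)
    | One_opp \<Rightarrow> 1 - eig_c1 p mu r
    | One_same \<Rightarrow> 1 - eig_c2 p mu r
    | Ended \<Rightarrow> 0)"

lemma eig_c1_c2_system:
  assumes "eig_det p mu r \<noteq> 0"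
  shows "eig_c1 p mu r * eig_s p r - p * (1 - mu) * eig_c2 p mu r = eig_e p r"
    and "eig_c2 p mu r * eig_s p r - p * eig_c1 p mu r = eig_e p r"
proof -
  let ?s = "eig_s p r" and ?e = "eig_e p r" and ?D = "eig_det p mu r"
  have "(?s + p * (1 - mu)) * ?s - p * (1 - mu) * (?s + p) = ?D"
    and "(?s + p) * ?s - p * (?s + p * (1 - mu)) = ?D"
    by (simp_all add: eig_det_def algebra_simps power2_eq_square)
  moreover have "eig_c1 p mu r * ?s - p * (1 - mu) * eig_c2 p mu r
      = ?e * ((?s + p * (1 - mu)) * ?s - p * (1 - mu) * (?s + p)) / ?D"
    and "eig_c2 p mu r * ?s - p * eig_c1 p mu r = ?e * ((?s + p) * ?s - p * (?s + p * (1 - mu))) / ?D"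
    using assms by (simp_all add: eig_c1_def eig_c2_def field_simps)
  ultimately show "eig_c1 p mu r * ?s - p * (1 - mu) * eig_c2 p mu r = ?e"
    and "eig_c2 p mu r * ?s - p * eig_c1 p mu r = ?e"
    using assms by simp_all
qed

lemma lumped_exp_approx_eigvec:
  assumes "p \<noteq> 0" "r \<noteq> 1" "eig_det p mu r \<noteq> 0" "s \<noteq> Both_opp" "s \<noteq> Ended"
  shows "lumped_exp p mu s (approx_eigvec p mu r) = (1 - r) * approx_eigvec p mu r s"
proof -
  note sys = eig_c1_c2_system[OF assms(3)]
  show ?thesis
  proof (cases s)
    case Together
    then show ?thesis using assms by (simp add: approx_eigvec_def field_simps)
  next
    case Both_same
    then show ?thesis using assms by (simp add: approx_eigvec_def field_simps)
  next
    case One_opp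
    then show ?thesis using sys(1) by (simp add: approx_eigvec_def eig_s_def eig_e_def field_simps)
  next
    case One_same
    then show ?thesis using sys(2) by (simp add: approx_eigvec_def eig_s_def eig_e_def field_simps)
  qed (use assms in auto)
qed

lemma approx_eigvec_defect:
  assumes "p \<noteq> 0" "r \<noteq> 1"
  shows "lumped_exp p mu Both_opp (approx_eigvec p mu r) - (1 - r) * approx_eigvec p mu r Both_opp
    = r * (1 + p - r) / p - p * (1 - mu) * (1 - p) * eig_c2 p mu r / (1 - r) - (1 - p) * eig_c1 p mu r"
  using assms by (simp add: approx_eigvec_def field_simps)

lemma eig_det_eq: "eig_det p mu r = eig_e p r * (eig_s p r + p) + mu * p\<^sup>2"
  by (simp add: eig_det_def eig_e_def eig_s_def field_simps power2_eq_square)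

lemma lumped_survival_ge_power:
  assumes "0 < p" "p \<le> 1" "0 \<le> mu" "mu \<le> 1" "0 \<le> r" "r < 1" "eig_det p mu r \<noteq> 0"
    and defect: "0 \<le> lumped_exp p mu Both_opp (approx_eigvec p mu r) - (1 - r) * approx_eigvec p mu r Both_opp"
    and close: "\<And>s. s \<noteq> Ended \<Longrightarrow> \<bar>1 - approx_eigvec p mu r s\<bar> \<le> \<epsilon>"
  shows "(1 - r) ^ k \<le> (1 + \<epsilon>) * lumped_survival p mu k Together"
proof -
  let ?w = "approx_eigvec p mu r"
  have "(1 - r) ^ k * ?w Together \<le> (1 + \<epsilon>) * lumped_survival p mu k Together"
  proof (rule lumped_survival_ge)
    show "0 \<le> 1 + \<epsilon>"
      using close[of Together] by simp
    show "?w s \<le> 1 + \<epsilon>" if "s \<noteq> Ended" for s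
      using close[OF that] by linarith
    show "(1 - r) * ?w s \<le> lumped_exp p mu s ?w" if "s \<noteq> Ended" for s
      using defect lumped_exp_approx_eigvec[of p r mu s] assms that by (cases "s = Both_opp") auto
  qed (use assms in \<open>auto simp: approx_eigvec_def\<close>)
  then show ?thesis by (simp add: approx_eigvec_def)
qed

lemma lumped_survival_le_power:
  assumes "0 < p" "p \<le> 1" "0 \<le> mu" "mu \<le> 1" "0 \<le> r" "r < 1" "eig_det p mu r \<noteq> 0"
    and defect: "lumped_exp p mu Both_opp (approx_eigvec p mu r) - (1 - r) * approx_eigvec p mu r Both_opp \<le> 0"
    and close: "\<And>s. s \<noteq> Ended \<Longrightarrow> \<bar>1 - approx_eigvec p mu r s\<bar> \<le> \<epsilon>" and "\<epsilon> \<le> 1"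
  shows "(1 - \<epsilon>) * lumped_survival p mu k Together \<le> (1 - r) ^ k"
proof -
  let ?w = "approx_eigvec p mu r"
  have lower: "1 - \<epsilon> \<le> ?w s" if "s \<noteq> Ended" for s
    using close[OF that] by linarith
  have "(1 - \<epsilon>) * lumped_survival p mu k Together \<le> (1 - r) ^ k * ?w Together"
  proof (rule lumped_survival_le)
    show "0 \<le> ?w s" for s
      using lower[of s] \<open>\<epsilon> \<le> 1\<close> by (cases "s = Ended") (auto simp: approx_eigvec_def)
    show "lumped_exp p mu s ?w \<le> (1 - r) * ?w s" if "s \<noteq> Ended" for s
      using defect lumped_exp_approx_eigvec[of p r mu s] assms that by (cases "s = Both_opp") auto
  qed (use assms lower in auto)
  then show ?thesis by (simp add: approx_eigvec_def)
qed

(* In the regime rho = q/mu, r = t q^2/mu, these are eig_det/mu, eig_c1/rho, eig_c2/rho and the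
   defect at Both_opp divided by q^2/mu (approx_eigvec_scaled); unlike the originals they have
   finite limits as mu, rho -> 0. *)
definition eig_scaled_det :: "real \<Rightarrow> real \<Rightarrow> real \<Rightarrow> real \<Rightarrow> real" where
  "eig_scaled_det t rho p r = p\<^sup>2 + rho * (1/2 - t * rho) * (eig_s p r + p)"

definition eig_scaled_c1 :: "real \<Rightarrow> real \<Rightarrow> real \<Rightarrow> real \<Rightarrow> real \<Rightarrow> real" where
  "eig_scaled_c1 t rho p mu r = (1/2 - t * rho) * (eig_s p r + p * (1 - mu)) / eig_scaled_det t rho p r"

definition eig_scaled_c2 :: "real \<Rightarrow> real \<Rightarrow> real \<Rightarrow> real \<Rightarrow> real" where
  "eig_scaled_c2 t rho p r = (1/2 - t * rho) * (eig_s p r + p) / eig_scaled_det t rho p r"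

definition eig_scaled_defect :: "real \<Rightarrow> real \<Rightarrow> real \<Rightarrow> real \<Rightarrow> real \<Rightarrow> real" where
  "eig_scaled_defect t rho p mu r =
     t * (1 + p - r) / p - p * (1 - mu) / (1 - r) * eig_scaled_c2 t rho p r - eig_scaled_c1 t rho p mu r"

lemma approx_eigvec_scaled:
  fixes mu q t :: real
  assumes "mu \<noteq> 0"
  defines "p \<equiv> 1 - q" and "rho \<equiv> q / mu" and "r \<equiv> t * q\<^sup>2 / mu"
  shows "eig_det p mu r = mu * eig_scaled_det t rho p r"
    and "approx_eigvec p mu r One_opp = 1 - rho * eig_scaled_c1 t rho p mu r"
    and "approx_eigvec p mu r One_same = 1 - rho * eig_scaled_c2 t rho p r"
    and "approx_eigvec p mu r Both_same = 1 - q * (rho * eig_scaled_c2 t rho p r) / (1 - r)"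
    and "p \<noteq> 0 \<Longrightarrow> r \<noteq> 1 \<Longrightarrow>
      lumped_exp p mu Both_opp (approx_eigvec p mu r) - (1 - r) * approx_eigvec p mu r Both_opp
        = q\<^sup>2 / mu * eig_scaled_defect t rho p mu r"
proof -
  have e: "eig_e p r = mu * (rho * (1/2 - t * rho))"
    using assms(1) by (simp add: eig_e_def p_def rho_def r_def field_simps power2_eq_square)
  show det: "eig_det p mu r = mu * eig_scaled_det t rho p r"
    unfolding eig_det_eq e eig_scaled_det_def by (simp add: algebra_simps)
  have c1: "eig_c1 p mu r = rho * eig_scaled_c1 t rho p mu r"
    and c2: "eig_c2 p mu r = rho * eig_scaled_c2 t rho p r"
    using assms(1) unfolding eig_c1_def eig_c2_def det e eig_scaled_c1_def eig_scaled_c2_def by simp_all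
  have q: "1 - p = q"
    by (simp add: p_def)
  show "approx_eigvec p mu r One_opp = 1 - rho * eig_scaled_c1 t rho p mu r"
    and "approx_eigvec p mu r One_same = 1 - rho * eig_scaled_c2 t rho p r"
    and "approx_eigvec p mu r Both_same = 1 - q * (rho * eig_scaled_c2 t rho p r) / (1 - r)"
    by (simp_all add: approx_eigvec_def c1 c2 q)
  assume "p \<noteq> 0" "r \<noteq> 1"
  have "r * (1 + p - r) / p = q\<^sup>2 / mu * (t * (1 + p - r) / p)"
    by (simp add: r_def)
  moreover have "p * (1 - mu) * (1 - p) * eig_c2 p mu r / (1 - r)
      = q\<^sup>2 / mu * (p * (1 - mu) / (1 - r) * eig_scaled_c2 t rho p r)"
    and "(1 - p) * eig_c1 p mu r = q\<^sup>2 / mu * eig_scaled_c1 t rho p mu r"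
    unfolding c1 c2 q by (simp_all add: rho_def divide_inverse algebra_simps power2_eq_square)
  ultimately show "lumped_exp p mu Both_opp (approx_eigvec p mu r) - (1 - r) * approx_eigvec p mu r Both_opp
      = q\<^sup>2 / mu * eig_scaled_defect t rho p mu r"
    using approx_eigvec_defect[OF \<open>p \<noteq> 0\<close> \<open>r \<noteq> 1\<close>, of mu]
    by (simp add: eig_scaled_defect_def right_diff_distrib)
qed

lemma eig_scaled_tendsto:
  fixes p r mu rho :: "nat \<Rightarrow> real"
  assumes p: "p \<longlonglongrightarrow> 1" and r: "r \<longlonglongrightarrow> 0" and mu: "mu \<longlonglongrightarrow> 0" and rho: "rho \<longlonglongrightarrow> 0"
  shows "(\<lambda>n. eig_scaled_det t (rho n) (p n) (r n)) \<longlonglongrightarrow> 1"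
    and "(\<lambda>n. eig_scaled_c1 t (rho n) (p n) (mu n) (r n)) \<longlonglongrightarrow> 1"
    and "(\<lambda>n. eig_scaled_c2 t (rho n) (p n) (r n)) \<longlonglongrightarrow> 1"
    and "(\<lambda>n. eig_scaled_defect t (rho n) (p n) (mu n) (r n)) \<longlonglongrightarrow> 2 * t - 2"
proof -
  have "(\<lambda>n. eig_s (p n) (r n)) \<longlonglongrightarrow> (1 + 1) / 2 - 0"
    unfolding eig_s_def by (intro tendsto_intros p r) simp_all
  then have s: "(\<lambda>n. eig_s (p n) (r n)) \<longlonglongrightarrow> 1"
    by simp
  have "(\<lambda>n. eig_scaled_det t (rho n) (p n) (r n)) \<longlonglongrightarrow> 1\<^sup>2 + 0 * (1/2 - t * 0) * (1 + 1)"
    unfolding eig_scaled_det_def by (intro tendsto_intros p rho s)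
  then show det: "(\<lambda>n. eig_scaled_det t (rho n) (p n) (r n)) \<longlonglongrightarrow> 1"
    by simp
  have "(\<lambda>n. eig_scaled_c1 t (rho n) (p n) (mu n) (r n)) \<longlonglongrightarrow> (1/2 - t * 0) * (1 + 1 * (1 - 0)) / 1"
    unfolding eig_scaled_c1_def by (intro tendsto_intros p rho s mu det) simp
  then show c1: "(\<lambda>n. eig_scaled_c1 t (rho n) (p n) (mu n) (r n)) \<longlonglongrightarrow> 1"
    by simp
  have "(\<lambda>n. eig_scaled_c2 t (rho n) (p n) (r n)) \<longlonglongrightarrow> (1/2 - t * 0) * (1 + 1) / 1"
    unfolding eig_scaled_c2_def by (intro tendsto_intros p rho s det) simp
  then show c2: "(\<lambda>n. eig_scaled_c2 t (rho n) (p n) (r n)) \<longlonglongrightarrow> 1"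
    by simp
  have "(\<lambda>n. eig_scaled_defect t (rho n) (p n) (mu n) (r n))
      \<longlonglongrightarrow> t * (1 + 1 - 0) / 1 - 1 * (1 - 0) / (1 - 0) * 1 - 1"
    unfolding eig_scaled_defect_def by (intro tendsto_intros p r mu c1 c2) simp_all
  then show "(\<lambda>n. eig_scaled_defect t (rho n) (p n) (mu n) (r n)) \<longlonglongrightarrow> 2 * t - 2"
    by (simp add: mult.commute)
qed

lemma scaled_regime_tendsto:
  fixes mu q :: "nat \<Rightarrow> real" and t :: real
  assumes mu0: "mu \<longlonglongrightarrow> 0" and rho0: "(\<lambda>n. q n / mu n) \<longlonglongrightarrow> 0"
    and pos: "\<forall>\<^sub>F n in sequentially. 0 < mu n \<and> 0 < q n"
  shows "q \<longlonglongrightarrow> 0" and "(\<lambda>n. t * (q n)\<^sup>2 / mu n) \<longlonglongrightarrow> 0"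
proof -
  have "(\<lambda>n. q n / mu n * mu n) \<longlonglongrightarrow> 0 * 0"
    by (intro tendsto_intros rho0 mu0)
  moreover have "\<forall>\<^sub>F n in sequentially. q n / mu n * mu n = q n"
    using pos by eventually_elim simp
  ultimately show q0: "q \<longlonglongrightarrow> 0"
    by (simp add: Lim_transform_eventually)
  have "(\<lambda>n. t * (q n / mu n) * q n) \<longlonglongrightarrow> t * 0 * 0"
    by (intro tendsto_intros rho0 q0)
  moreover have "\<forall>\<^sub>F n in sequentially. t * (q n / mu n) * q n = t * (q n)\<^sup>2 / mu n"
    using pos by eventually_elim (simp add: power2_eq_square)
  ultimately show "(\<lambda>n. t * (q n)\<^sup>2 / mu n) \<longlonglongrightarrow> 0"
    by (simp add: Lim_transform_eventually)
qed

lemma approx_eigvec_tendsto: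
  fixes mu q :: "nat \<Rightarrow> real" and t :: real
  assumes mu0: "mu \<longlonglongrightarrow> 0" and rho0: "(\<lambda>n. q n / mu n) \<longlonglongrightarrow> 0"
    and pos: "\<forall>\<^sub>F n in sequentially. 0 < mu n \<and> 0 < q n" and "s \<noteq> Ended"
  shows "(\<lambda>n. approx_eigvec (1 - q n) (mu n) (t * (q n)\<^sup>2 / mu n) s) \<longlonglongrightarrow> 1"
proof -
  define rho where "rho n = q n / mu n" for n
  define p where "p n = 1 - q n" for n
  define r where "r n = t * (q n)\<^sup>2 / mu n" for n
  define w where "w n = approx_eigvec (p n) (mu n) (r n)" for n
  have q0: "q \<longlonglongrightarrow> 0"
    by (rule scaled_regime_tendsto(1)[OF mu0 rho0 pos])
  have r0: "r \<longlonglongrightarrow> 0"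
    using scaled_regime_tendsto(2)[OF mu0 rho0 pos, of t] by (simp add: r_def[abs_def])
  have rho: "rho \<longlonglongrightarrow> 0"
    using rho0 by (simp add: rho_def[abs_def])
  have p1: "p \<longlonglongrightarrow> 1"
    unfolding p_def[abs_def] using tendsto_diff[OF tendsto_const q0, of 1] by simp
  note lims = eig_scaled_tendsto[OF p1 r0 mu0 rho, of t]
  have scaled: "\<forall>\<^sub>F n in sequentially. w n One_opp = 1 - rho n * eig_scaled_c1 t (rho n) (p n) (mu n) (r n)
      \<and> w n One_same = 1 - rho n * eig_scaled_c2 t (rho n) (p n) (r n)
      \<and> w n Both_same = 1 - q n * (rho n * eig_scaled_c2 t (rho n) (p n) (r n)) / (1 - r n)"
    using pos by eventually_elim (simp add: w_def p_def rho_def r_def approx_eigvec_scaled)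
  have "(\<lambda>n. w n s) \<longlonglongrightarrow> 1"
  proof (cases s)
    case Both_opp
    have "(\<lambda>n. 1 - r n / p n) \<longlonglongrightarrow> 1 - 0 / 1"
      by (intro tendsto_intros r0 p1) simp
    then show ?thesis
      using Both_opp by (simp add: w_def approx_eigvec_def)
  next
    case Both_same
    have "(\<lambda>n. 1 - q n * (rho n * eig_scaled_c2 t (rho n) (p n) (r n)) / (1 - r n)) \<longlonglongrightarrow> 1 - 0 * (0 * 1) / (1 - 0)"
      by (intro tendsto_intros q0 rho lims r0) simp
    then have "(\<lambda>n. w n Both_same) \<longlonglongrightarrow> 1 - 0 * (0 * 1) / (1 - 0)"
      by (rule Lim_transform_eventually) (use scaled in \<open>auto elim: eventually_mono\<close>)
    then show ?thesis
      using Both_same by simp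
  next
    case One_opp
    have "(\<lambda>n. 1 - rho n * eig_scaled_c1 t (rho n) (p n) (mu n) (r n)) \<longlonglongrightarrow> 1 - 0 * 1"
      by (intro tendsto_intros rho lims)
    then have "(\<lambda>n. w n One_opp) \<longlonglongrightarrow> 1 - 0 * 1"
      by (rule Lim_transform_eventually) (use scaled in \<open>auto elim: eventually_mono\<close>)
    then show ?thesis
      using One_opp by simp
  next
    case One_same
    have "(\<lambda>n. 1 - rho n * eig_scaled_c2 t (rho n) (p n) (r n)) \<longlonglongrightarrow> 1 - 0 * 1"
      by (intro tendsto_intros rho lims)
    then have "(\<lambda>n. w n One_same) \<longlonglongrightarrow> 1 - 0 * 1"
      by (rule Lim_transform_eventually) (use scaled in \<open>auto elim: eventually_mono\<close>)
    then show ?thesis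
      using One_same by simp
  qed (use \<open>s \<noteq> Ended\<close> in \<open>simp_all add: w_def approx_eigvec_def\<close>)
  then show ?thesis
    by (simp add: w_def p_def r_def)
qed

lemma approx_eigvec_defect_asymp:
  fixes mu q :: "nat \<Rightarrow> real" and t :: real
  assumes mu0: "mu \<longlonglongrightarrow> 0" and rho0: "(\<lambda>n. q n / mu n) \<longlonglongrightarrow> 0"
    and pos: "\<forall>\<^sub>F n in sequentially. 0 < mu n \<and> 0 < q n"
  defines "r \<equiv> \<lambda>n. t * (q n)\<^sup>2 / mu n"
  defines "w \<equiv> \<lambda>n. approx_eigvec (1 - q n) (mu n) (r n)"
  shows "\<forall>\<^sub>F n in sequentially. eig_det (1 - q n) (mu n) (r n) \<noteq> 0"
    and "(\<lambda>n. mu n / (q n)\<^sup>2 * (lumped_exp (1 - q n) (mu n) Both_opp (w n) - (1 - r n) * w n Both_opp))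
           \<longlonglongrightarrow> 2 * t - 2"
proof -
  define rho where "rho n = q n / mu n" for n
  define p where "p n = 1 - q n" for n
  have q0: "q \<longlonglongrightarrow> 0"
    by (rule scaled_regime_tendsto(1)[OF mu0 rho0 pos])
  have r0: "r \<longlonglongrightarrow> 0"
    using scaled_regime_tendsto(2)[OF mu0 rho0 pos, of t] by (simp add: r_def)
  have rho: "rho \<longlonglongrightarrow> 0"
    using rho0 by (simp add: rho_def[abs_def])
  have p1: "p \<longlonglongrightarrow> 1"
    unfolding p_def[abs_def] using tendsto_diff[OF tendsto_const q0, of 1] by simp
  note lims = eig_scaled_tendsto[OF p1 r0 mu0 rho, of t]
  have ev: "\<forall>\<^sub>F n in sequentially. 0 < p n \<and> r n < 1 \<and> 0 < eig_scaled_det t (rho n) (p n) (r n)"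
    using order_tendstoD(1)[OF p1, of 0] order_tendstoD(2)[OF r0, of 1] order_tendstoD(1)[OF lims(1), of 0]
    by (simp add: eventually_conj_iff)
  have scaled: "\<forall>\<^sub>F n in sequentially. eig_det (p n) (mu n) (r n) = mu n * eig_scaled_det t (rho n) (p n) (r n)
      \<and> (p n \<noteq> 0 \<longrightarrow> r n \<noteq> 1 \<longrightarrow> lumped_exp (p n) (mu n) Both_opp (w n) - (1 - r n) * w n Both_opp
            = (q n)\<^sup>2 / mu n * eig_scaled_defect t (rho n) (p n) (mu n) (r n))"
    using pos
  proof eventually_elim
    case (elim n)
    then have "mu n \<noteq> 0" by simp
    from approx_eigvec_scaled(1,5)[OF this, of "q n" t] show ?case
      unfolding w_def p_def rho_def r_def by simp
  qed
  with ev pos show "\<forall>\<^sub>F n in sequentially. eig_det (1 - q n) (mu n) (r n) \<noteq> 0"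
    by eventually_elim (auto simp: p_def)
  from scaled ev pos have "\<forall>\<^sub>F n in sequentially. eig_scaled_defect t (rho n) (p n) (mu n) (r n)
      = mu n / (q n)\<^sup>2 * (lumped_exp (p n) (mu n) Both_opp (w n) - (1 - r n) * w n Both_opp)"
    by eventually_elim auto
  with lims(4) have "(\<lambda>n. mu n / (q n)\<^sup>2 * (lumped_exp (p n) (mu n) Both_opp (w n) - (1 - r n) * w n Both_opp))
      \<longlonglongrightarrow> 2 * t - 2"
    by (rule Lim_transform_eventually)
  then show "(\<lambda>n. mu n / (q n)\<^sup>2 * (lumped_exp (1 - q n) (mu n) Both_opp (w n) - (1 - r n) * w n Both_opp))
      \<longlonglongrightarrow> 2 * t - 2"
    by (simp only: p_def)
qed

lemma lumped_survival_asymp: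
  fixes mu q :: "nat \<Rightarrow> real" and t :: real
  assumes mu0: "mu \<longlonglongrightarrow> 0" and rho0: "(\<lambda>n. q n / mu n) \<longlonglongrightarrow> 0"
    and pos: "\<forall>\<^sub>F n in sequentially. 0 < mu n \<and> 0 < q n" and "0 < t"
  obtains \<epsilon> where "\<epsilon> \<longlonglongrightarrow> 0"
    and "1 < t \<Longrightarrow> \<forall>\<^sub>F n in sequentially. \<forall>k.
           (1 - t * (q n)\<^sup>2 / mu n) ^ k \<le> (1 + \<epsilon> n) * lumped_survival (1 - q n) (mu n) k Together"
    and "t < 1 \<Longrightarrow> \<forall>\<^sub>F n in sequentially. \<forall>k.
           (1 - \<epsilon> n) * lumped_survival (1 - q n) (mu n) k Together \<le> (1 - t * (q n)\<^sup>2 / mu n) ^ k"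
proof -
  define r where "r n = t * (q n)\<^sup>2 / mu n" for n
  define w where "w n = approx_eigvec (1 - q n) (mu n) (r n)" for n
  define D where "D n = lumped_exp (1 - q n) (mu n) Both_opp (w n) - (1 - r n) * w n Both_opp" for n
  define live where "live = {Together, Both_opp, Both_same, One_opp, One_same}"
  define \<epsilon> where "\<epsilon> n = (\<Sum>s\<in>live. \<bar>1 - w n s\<bar>)" for n
  have q0: "q \<longlonglongrightarrow> 0"
    by (rule scaled_regime_tendsto(1)[OF mu0 rho0 pos])
  have r0: "r \<longlonglongrightarrow> 0"
    using scaled_regime_tendsto(2)[OF mu0 rho0 pos, of t] by (simp add: r_def[abs_def])
  have w1: "(\<lambda>n. w n s) \<longlonglongrightarrow> 1" if "s \<noteq> Ended" for s
    using approx_eigvec_tendsto[OF mu0 rho0 pos that, of t] by (simp add: w_def r_def)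
  note defect = approx_eigvec_defect_asymp[OF mu0 rho0 pos, of t]
  have det: "\<forall>\<^sub>F n in sequentially. eig_det (1 - q n) (mu n) (r n) \<noteq> 0"
    using defect(1) unfolding r_def[abs_def] .
  have D: "(\<lambda>n. mu n / (q n)\<^sup>2 * D n) \<longlonglongrightarrow> 2 * t - 2"
    using defect(2) unfolding r_def[abs_def] w_def[abs_def] D_def[abs_def] .
  have "(\<lambda>n. \<Sum>s\<in>live. \<bar>1 - w n s\<bar>) \<longlonglongrightarrow> (\<Sum>s\<in>live. \<bar>1 - 1\<bar>)"
    by (intro tendsto_intros w1) (auto simp: live_def)
  then have \<epsilon>0: "\<epsilon> \<longlonglongrightarrow> 0"
    by (simp add: \<epsilon>_def[abs_def])
  have close: "\<bar>1 - w n s\<bar> \<le> \<epsilon> n" if "s \<noteq> Ended" for n s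
    unfolding \<epsilon>_def by (rule member_le_sum) (use that in \<open>cases s; auto simp: live_def\<close>)+
  have basic: "\<forall>\<^sub>F n in sequentially. 0 < mu n \<and> 0 < q n \<and> q n < 1 \<and> mu n < 1 \<and> r n < 1 \<and> \<epsilon> n < 1
      \<and> eig_det (1 - q n) (mu n) (r n) \<noteq> 0"
    using pos det order_tendstoD(2)[OF q0, of 1] order_tendstoD(2)[OF mu0, of 1]
      order_tendstoD(2)[OF r0, of 1] order_tendstoD(2)[OF \<epsilon>0, of 1]
    by (simp add: eventually_conj_iff)
  show ?thesis
  proof
    show "\<epsilon> \<longlonglongrightarrow> 0" by (fact \<epsilon>0)
  next
    assume "1 < t"
    have "\<forall>\<^sub>F n in sequentially. 0 < mu n / (q n)\<^sup>2 * D n"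
      using D by (rule order_tendstoD) (use \<open>1 < t\<close> in simp)
    with basic show "\<forall>\<^sub>F n in sequentially. \<forall>k.
        (1 - t * (q n)\<^sup>2 / mu n) ^ k \<le> (1 + \<epsilon> n) * lumped_survival (1 - q n) (mu n) k Together"
    proof eventually_elim
      case (elim n)
      then have "0 < mu n * D n"
        by (simp add: zero_less_divide_iff)
      with elim have "0 \<le> D n"
        by (simp add: zero_less_mult_iff)
      then have "(1 - r n) ^ k \<le> (1 + \<epsilon> n) * lumped_survival (1 - q n) (mu n) k Together" for k
        using elim close \<open>0 < t\<close> by (intro lumped_survival_ge_power) (auto simp: D_def w_def r_def)
      then show ?case by (simp add: r_def)
    qed
  next
    assume "t < 1"
    have "\<forall>\<^sub>F n in sequentially. mu n / (q n)\<^sup>2 * D n < 0"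
      using D by (rule order_tendstoD) (use \<open>t < 1\<close> in simp)
    with basic show "\<forall>\<^sub>F n in sequentially. \<forall>k.
        (1 - \<epsilon> n) * lumped_survival (1 - q n) (mu n) k Together \<le> (1 - t * (q n)\<^sup>2 / mu n) ^ k"
    proof eventually_elim
      case (elim n)
      then have "mu n * D n < 0"
        by (simp add: divide_less_0_iff)
      with elim have "D n \<le> 0"
        by (simp add: mult_less_0_iff)
      then have "(1 - \<epsilon> n) * lumped_survival (1 - q n) (mu n) k Together \<le> (1 - r n) ^ k" for k
        using elim close \<open>0 < t\<close> by (intro lumped_survival_le_power) (auto simp: D_def w_def r_def)
      then show ?case by (simp add: r_def)
    qed
  qed
qed

section \<open>Poisson averages and the end of epidemic time\<close>

definition poisson_average :: "real \<Rightarrow> (nat \<Rightarrow> real) \<Rightarrow> real" where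
  "poisson_average M S = (\<Sum>k. exp (- M) * M ^ k / fact k * S k)"

lemma poisson_weights_power_sums:
  fixes M c :: real
  shows "(\<lambda>k. exp (- M) * M ^ k / fact k * c ^ k) sums exp (- M * (1 - c))"
proof -
  have "(\<lambda>k. exp (- M) * ((M * c) ^ k /\<^sub>R fact k)) sums (exp (- M) * exp (M * c))"
    by (intro sums_mult exp_converges)
  moreover have "exp (- M) * exp (M * c) = exp (- M * (1 - c))"
    by (simp add: mult_exp_exp algebra_simps)
  ultimately show ?thesis
    by (simp add: power_mult_distrib divide_inverse algebra_simps)
qed

lemma summable_poisson_weighted:
  fixes M :: real and S :: "nat \<Rightarrow> real"
  assumes "0 \<le> M" "\<And>k. 0 \<le> S k" "\<And>k. S k \<le> 1"
  shows "summable (\<lambda>k. exp (- M) * M ^ k / fact k * S k)"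
proof (rule summable_comparison_test')
  show "summable (\<lambda>k. exp (- M) * M ^ k / fact k)"
    using poisson_weights_power_sums[of M 1] by (simp add: sums_iff)
  show "norm (exp (- M) * M ^ k / fact k * S k) \<le> exp (- M) * M ^ k / fact k" for k
  proof -
    have w: "0 \<le> exp (- M) * M ^ k / fact k"
      using assms(1) by simp
    then have "norm (exp (- M) * M ^ k / fact k * S k) = exp (- M) * M ^ k / fact k * S k"
      using assms(2)[of k] by (simp only: real_norm_def abs_of_nonneg mult_nonneg_nonneg)
    also have "\<dots> \<le> exp (- M) * M ^ k / fact k"
      by (rule mult_left_le[OF assms(3) w])
    finally show ?thesis .
  qed
qed

lemma poisson_average_one_minus:
  assumes "0 \<le> M" "\<And>k. 0 \<le> S k" "\<And>k. S k \<le> 1"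
  shows "poisson_average M (\<lambda>k. 1 - S k) = 1 - poisson_average M S"
proof -
  have "(\<lambda>k. exp (- M) * M ^ k / fact k) sums 1"
    using poisson_weights_power_sums[of M 1] by simp
  moreover have "summable (\<lambda>k. exp (- M) * M ^ k / fact k * S k)"
    by (rule summable_poisson_weighted[OF assms])
  ultimately have "(\<lambda>k. exp (- M) * M ^ k / fact k - exp (- M) * M ^ k / fact k * S k)
      sums (1 - poisson_average M S)"
    unfolding poisson_average_def by (intro sums_diff) (simp_all add: summable_sums)
  then show ?thesis
    unfolding poisson_average_def by (simp add: sums_iff right_diff_distrib)
qed

lemma poisson_average_ge_exp:
  assumes "0 \<le> M" "\<And>k. 0 \<le> S k" "\<And>k. S k \<le> 1" "\<And>k. (1 - r) ^ k \<le> W * S k"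
  shows "exp (- M * r) \<le> W * poisson_average M S"
proof -
  have pw: "(\<lambda>k. exp (- M) * M ^ k / fact k * (1 - r) ^ k) sums exp (- M * r)"
    using poisson_weights_power_sums[of M "1 - r"] by simp
  have sm: "summable (\<lambda>k. exp (- M) * M ^ k / fact k * S k)"
    by (rule summable_poisson_weighted[OF assms(1-3)])
  have "exp (- M * r) = (\<Sum>k. exp (- M) * M ^ k / fact k * (1 - r) ^ k)"
    using pw by (simp add: sums_iff)
  also have "\<dots> \<le> (\<Sum>k. W * (exp (- M) * M ^ k / fact k * S k))"
  proof (rule suminf_le)
    show "exp (- M) * M ^ k / fact k * (1 - r) ^ k \<le> W * (exp (- M) * M ^ k / fact k * S k)" for k
      using mult_left_mono[OF assms(4)[of k], of "exp (- M) * M ^ k / fact k"] assms(1)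
      by (simp add: algebra_simps)
    show "summable (\<lambda>k. exp (- M) * M ^ k / fact k * (1 - r) ^ k)"
      using pw by (simp add: sums_iff)
    show "summable (\<lambda>k. W * (exp (- M) * M ^ k / fact k * S k))"
      using sm by (rule summable_mult)
  qed
  also have "\<dots> = W * poisson_average M S"
    unfolding poisson_average_def using sm by (rule suminf_mult)
  finally show ?thesis .
qed

lemma poisson_average_le_exp:
  assumes "0 \<le> M" "\<And>k. 0 \<le> S k" "\<And>k. S k \<le> 1" "\<And>k. L * S k \<le> (1 - r) ^ k"
  shows "L * poisson_average M S \<le> exp (- M * r)"
proof -
  have pw: "(\<lambda>k. exp (- M) * M ^ k / fact k * (1 - r) ^ k) sums exp (- M * r)"
    using poisson_weights_power_sums[of M "1 - r"] by simp
  have sm: "summable (\<lambda>k. exp (- M) * M ^ k / fact k * S k)"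
    by (rule summable_poisson_weighted[OF assms(1-3)])
  have "L * poisson_average M S = (\<Sum>k. L * (exp (- M) * M ^ k / fact k * S k))"
    unfolding poisson_average_def using sm by (rule suminf_mult[symmetric])
  also have "\<dots> \<le> (\<Sum>k. exp (- M) * M ^ k / fact k * (1 - r) ^ k)"
  proof (rule suminf_le)
    show "L * (exp (- M) * M ^ k / fact k * S k) \<le> exp (- M) * M ^ k / fact k * (1 - r) ^ k" for k
      using mult_left_mono[OF assms(4)[of k], of "exp (- M) * M ^ k / fact k"] assms(1)
      by (simp add: algebra_simps)
    show "summable (\<lambda>k. exp (- M) * M ^ k / fact k * (1 - r) ^ k)"
      using pw by (simp add: sums_iff)
    show "summable (\<lambda>k. L * (exp (- M) * M ^ k / fact k * S k))"
      using sm by (rule summable_mult)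
  qed
  also have "\<dots> = exp (- M * r)"
    using pw by (simp add: sums_iff)
  finally show ?thesis .
qed

lemma tendsto_squeeze_param:
  fixes a :: "nat \<Rightarrow> real" and g :: "real \<Rightarrow> real"
  assumes cont: "isCont g 1"
    and lower: "\<And>t. 1 < t \<Longrightarrow> t < 2 \<Longrightarrow> \<exists>b. b \<longlonglongrightarrow> g t \<and> (\<forall>\<^sub>F n in sequentially. b n \<le> a n)"
    and upper: "\<And>t. 0 < t \<Longrightarrow> t < 1 \<Longrightarrow> \<exists>c. c \<longlonglongrightarrow> g t \<and> (\<forall>\<^sub>F n in sequentially. a n \<le> c n)"
  shows "a \<longlonglongrightarrow> g 1"
proof -
  have g: "(g \<longlongrightarrow> g 1) (at 1)"
    using cont by (simp add: isCont_def)
  show ?thesis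
  proof (rule order_tendstoI)
    fix y
    assume "y < g 1"
    with g have "\<forall>\<^sub>F t in at 1. y < g t"
      by (rule order_tendstoD)
    then obtain d where d: "d > 0" "\<And>t. t \<noteq> 1 \<Longrightarrow> dist t 1 < d \<Longrightarrow> y < g t"
      unfolding eventually_at by blast
    define t where "t = 1 + min d 1 / 2"
    have t: "1 < t" "t < 2" "y < g t"
      using d by (auto simp: t_def dist_real_def intro!: d(2))
    obtain b where b: "b \<longlonglongrightarrow> g t" "\<forall>\<^sub>F n in sequentially. b n \<le> a n"
      using lower[OF t(1,2)] by blast
    have "\<forall>\<^sub>F n in sequentially. y < b n"
      using b(1) t(3) by (rule order_tendstoD)
    with b(2) show "\<forall>\<^sub>F n in sequentially. y < a n"
      by eventually_elim auto
  next
    fix y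
    assume "g 1 < y"
    with g have "\<forall>\<^sub>F t in at 1. g t < y"
      by (rule order_tendstoD)
    then obtain d where d: "d > 0" "\<And>t. t \<noteq> 1 \<Longrightarrow> dist t 1 < d \<Longrightarrow> g t < y"
      unfolding eventually_at by blast
    define t where "t = 1 - min d 1 / 2"
    have t: "0 < t" "t < 1" "g t < y"
      using d by (auto simp: t_def dist_real_def intro!: d(2))
    obtain c where c: "c \<longlonglongrightarrow> g t" "\<forall>\<^sub>F n in sequentially. a n \<le> c n"
      using upper[OF t(1,2)] by blast
    have "\<forall>\<^sub>F n in sequentially. c n < y"
      using c(1) t(3) by (rule order_tendstoD)
    with c(2) show "\<forall>\<^sub>F n in sequentially. a n < y"
      by eventually_elim auto
  qed
qed

lemma end_cdf_bip_eq:
  fixes lam gam \<tau> :: real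
  assumes "1 \<le> a" "1 \<le> b" "0 < lam" "0 < gam" "v0 \<in> bip_V a b" "0 \<le> \<tau>"
  shows "end_cdf (bip_V a b) bip_E lam gam v0 \<tau> = 1 - poisson_average (2 * (lam + gam) * \<tau>)
           (\<lambda>k. lumped_survival (1 - gam / (lam + gam)) ((1 / a + 1 / b) / 2) k Together)"
proof -
  let ?p = "1 - gam / (lam + gam)" and ?mu = "(1 / a + 1 / b) / 2"
  let ?S = "\<lambda>k. lumped_survival ?p ?mu k Together"
  have p: "lam / (lam + gam) = ?p" "0 \<le> ?p" "?p \<le> 1"
    using assms(3,4) by (auto simp: field_simps)
  have "0 < ?mu \<and> ?mu \<le> 1"
    using bip_meet_rate_bounds[OF assms(1,2)] .
  then have S: "0 \<le> ?S k" "?S k \<le> 1" for k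
    using lumped_survival_bounds[of ?p ?mu k Together] p by auto
  have "hit_within (epi_step (bip_V a b) bip_E lam gam) both_susceptible k (v0, v0, True, True) = 1 - ?S k" for k
    using hit_within_epi_bip[of a b lam gam "(v0, v0, True, True)" k] assms(1,2,5) p
    by (simp add: valid_epi_state_def lump_def)
  then have "end_cdf (bip_V a b) bip_E lam gam v0 \<tau> = poisson_average (2 * (lam + gam) * \<tau>) (\<lambda>k. 1 - ?S k)"
    using assms(6) by (simp add: end_cdf_def poisson_average_def)
  also have "\<dots> = 1 - poisson_average (2 * (lam + gam) * \<tau>) ?S"
    using assms(3,4,6) S by (intro poisson_average_one_minus) auto
  finally show ?thesis .
qed

lemma poisson_lumped_survival_lower:
  fixes mu q M :: "nat \<Rightarrow> real"
  assumes mu0: "mu \<longlonglongrightarrow> 0" and rho0: "(\<lambda>n. q n / mu n) \<longlonglongrightarrow> 0"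
    and bounds: "\<forall>\<^sub>F n in sequentially. 0 < mu n \<and> mu n \<le> 1 \<and> 0 < q n \<and> q n \<le> 1 \<and> 0 \<le> M n"
    and scale: "(\<lambda>n. M n * (q n)\<^sup>2 / mu n) \<longlonglongrightarrow> x" and "1 < t"
  shows "\<exists>b. b \<longlonglongrightarrow> exp (- (t * x)) \<and> (\<forall>\<^sub>F n in sequentially.
           b n \<le> poisson_average (M n) (\<lambda>k. lumped_survival (1 - q n) (mu n) k Together))"
proof -
  define S where "S n k = lumped_survival (1 - q n) (mu n) k Together" for n k
  have pos: "\<forall>\<^sub>F n in sequentially. 0 < mu n \<and> 0 < q n"
    using bounds by (auto elim: eventually_mono)
  obtain \<epsilon> where \<epsilon>: "\<epsilon> \<longlonglongrightarrow> 0"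
    and bound: "\<forall>\<^sub>F n in sequentially. \<forall>k. (1 - t * (q n)\<^sup>2 / mu n) ^ k \<le> (1 + \<epsilon> n) * S n k"
    using lumped_survival_asymp[OF mu0 rho0 pos, of t] \<open>1 < t\<close> unfolding S_def by auto
  have "(\<lambda>n. exp (- (t * (M n * (q n)\<^sup>2 / mu n))) / (1 + \<epsilon> n)) \<longlonglongrightarrow> exp (- (t * x)) / (1 + 0)"
    by (intro tendsto_intros scale \<epsilon>) simp
  moreover have "(\<lambda>n. 1 + \<epsilon> n) \<longlonglongrightarrow> 1 + 0"
    by (intro tendsto_intros \<epsilon>)
  then have "\<forall>\<^sub>F n in sequentially. 0 < 1 + \<epsilon> n"
    by (rule order_tendstoD) simp
  with bounds bound have "\<forall>\<^sub>F n in sequentially.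
      exp (- (t * (M n * (q n)\<^sup>2 / mu n))) / (1 + \<epsilon> n) \<le> poisson_average (M n) (S n)"
  proof eventually_elim
    case (elim n)
    then have "exp (- M n * (t * (q n)\<^sup>2 / mu n)) \<le> (1 + \<epsilon> n) * poisson_average (M n) (S n)"
      using lumped_survival_bounds[of "1 - q n" "mu n"] by (intro poisson_average_ge_exp) (auto simp: S_def)
    with elim show ?case
      by (simp add: divide_le_eq mult.commute mult.left_commute)
  qed
  ultimately show ?thesis
    unfolding S_def by auto
qed

lemma poisson_lumped_survival_upper:
  fixes mu q M :: "nat \<Rightarrow> real"
  assumes mu0: "mu \<longlonglongrightarrow> 0" and rho0: "(\<lambda>n. q n / mu n) \<longlonglongrightarrow> 0"
    and bounds: "\<forall>\<^sub>F n in sequentially. 0 < mu n \<and> mu n \<le> 1 \<and> 0 < q n \<and> q n \<le> 1 \<and> 0 \<le> M n"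
    and scale: "(\<lambda>n. M n * (q n)\<^sup>2 / mu n) \<longlonglongrightarrow> x" and "0 < t" "t < 1"
  shows "\<exists>c. c \<longlonglongrightarrow> exp (- (t * x)) \<and> (\<forall>\<^sub>F n in sequentially.
           poisson_average (M n) (\<lambda>k. lumped_survival (1 - q n) (mu n) k Together) \<le> c n)"
proof -
  define S where "S n k = lumped_survival (1 - q n) (mu n) k Together" for n k
  have pos: "\<forall>\<^sub>F n in sequentially. 0 < mu n \<and> 0 < q n"
    using bounds by (auto elim: eventually_mono)
  obtain \<epsilon> where \<epsilon>: "\<epsilon> \<longlonglongrightarrow> 0"
    and bound: "\<forall>\<^sub>F n in sequentially. \<forall>k. (1 - \<epsilon> n) * S n k \<le> (1 - t * (q n)\<^sup>2 / mu n) ^ k"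
    using lumped_survival_asymp[OF mu0 rho0 pos, of t] \<open>0 < t\<close> \<open>t < 1\<close> unfolding S_def by auto
  have "(\<lambda>n. exp (- (t * (M n * (q n)\<^sup>2 / mu n))) / (1 - \<epsilon> n)) \<longlonglongrightarrow> exp (- (t * x)) / (1 - 0)"
    by (intro tendsto_intros scale \<epsilon>) simp
  moreover have "(\<lambda>n. 1 - \<epsilon> n) \<longlonglongrightarrow> 1 - 0"
    by (intro tendsto_intros \<epsilon>)
  then have "\<forall>\<^sub>F n in sequentially. 0 < 1 - \<epsilon> n"
    by (rule order_tendstoD) simp
  with bounds bound have "\<forall>\<^sub>F n in sequentially.
      poisson_average (M n) (S n) \<le> exp (- (t * (M n * (q n)\<^sup>2 / mu n))) / (1 - \<epsilon> n)"
  proof eventually_elim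
    case (elim n)
    then have "(1 - \<epsilon> n) * poisson_average (M n) (S n) \<le> exp (- M n * (t * (q n)\<^sup>2 / mu n))"
      using lumped_survival_bounds[of "1 - q n" "mu n"] by (intro poisson_average_le_exp) (auto simp: S_def)
    with elim show ?case
      by (simp add: le_divide_eq mult.commute mult.left_commute)
  qed
  ultimately show ?thesis
    unfolding S_def by auto
qed

lemma poisson_lumped_survival_tendsto:
  fixes mu q M :: "nat \<Rightarrow> real"
  assumes mu0: "mu \<longlonglongrightarrow> 0" and rho0: "(\<lambda>n. q n / mu n) \<longlonglongrightarrow> 0"
    and bounds: "\<forall>\<^sub>F n in sequentially. 0 < mu n \<and> mu n \<le> 1 \<and> 0 < q n \<and> q n \<le> 1 \<and> 0 \<le> M n"
    and scale: "(\<lambda>n. M n * (q n)\<^sup>2 / mu n) \<longlonglongrightarrow> x"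
  shows "(\<lambda>n. poisson_average (M n) (\<lambda>k. lumped_survival (1 - q n) (mu n) k Together)) \<longlonglongrightarrow> exp (- x)"
proof -
  have "(\<lambda>n. poisson_average (M n) (\<lambda>k. lumped_survival (1 - q n) (mu n) k Together)) \<longlonglongrightarrow> exp (- (1 * x))"
  proof (rule tendsto_squeeze_param[where g="\<lambda>t. exp (- (t * x))"])
    show "isCont (\<lambda>t. exp (- (t * x))) 1"
      by (intro continuous_intros)
  qed (use poisson_lumped_survival_lower[OF assms] poisson_lumped_survival_upper[OF assms] in auto)
  then show ?thesis
    by simp
qed

lemma end_cdf_bip_tendsto:
  fixes a b :: "nat \<Rightarrow> nat" and lam gam \<tau> :: "nat \<Rightarrow> real" and v0 :: "nat \<Rightarrow> bool \<times> nat"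
  assumes good: "\<forall>\<^sub>F n in sequentially.
      1 \<le> a n \<and> 1 \<le> b n \<and> 0 < lam n \<and> 0 < gam n \<and> v0 n \<in> bip_V (a n) (b n) \<and> 0 \<le> \<tau> n"
    and mu0: "(\<lambda>n. (1 / a n + 1 / b n) / 2) \<longlonglongrightarrow> 0"
    and rho0: "(\<lambda>n. gam n / (lam n + gam n) / ((1 / a n + 1 / b n) / 2)) \<longlonglongrightarrow> 0"
    and scale: "(\<lambda>n. 2 * (lam n + gam n) * \<tau> n * (gam n / (lam n + gam n))\<^sup>2 / ((1 / a n + 1 / b n) / 2)) \<longlonglongrightarrow> x"
  shows "(\<lambda>n. end_cdf (bip_V (a n) (b n)) bip_E (lam n) (gam n) (v0 n) (\<tau> n)) \<longlonglongrightarrow> 1 - exp (- x)"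
proof -
  let ?mu = "\<lambda>n. (1 / real (a n) + 1 / real (b n)) / 2" and ?q = "\<lambda>n. gam n / (lam n + gam n)"
  let ?P = "\<lambda>n. poisson_average (2 * (lam n + gam n) * \<tau> n) (\<lambda>k. lumped_survival (1 - ?q n) (?mu n) k Together)"
  have "\<forall>\<^sub>F n in sequentially. 0 < ?mu n \<and> ?mu n \<le> 1 \<and> 0 < ?q n \<and> ?q n \<le> 1 \<and> 0 \<le> 2 * (lam n + gam n) * \<tau> n"
    using good by eventually_elim (use bip_meet_rate_bounds in \<open>auto simp: field_simps\<close>)
  from poisson_lumped_survival_tendsto[OF mu0 rho0 this scale]
  have "(\<lambda>n. 1 - ?P n) \<longlonglongrightarrow> 1 - exp (- x)"
    by (intro tendsto_intros)
  moreover have "\<forall>\<^sub>F n in sequentially. 1 - ?P n = end_cdf (bip_V (a n) (b n)) bip_E (lam n) (gam n) (v0 n) (\<tau> n)"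
    using good by eventually_elim (simp add: end_cdf_bip_eq)
  ultimately show ?thesis
    by (rule Lim_transform_eventually)
qed

section \<open>The graphs K(m, n - m)\<close>

lemma weak_conv_exp_cdfI:
  assumes "\<And>x. x < 0 \<Longrightarrow> \<forall>\<^sub>F n in sequentially. F n x = 0"
    and "\<And>x. 0 \<le> x \<Longrightarrow> (\<lambda>n. F n x) \<longlonglongrightarrow> 1 - exp (- mu * x)"
  shows "weak_conv F (exp_cdf mu)"
  unfolding weak_conv_def
proof (intro allI impI)
  fix x
  show "(\<lambda>n. F n x) \<longlonglongrightarrow> exp_cdf mu x"
  proof (cases "x < 0")
    case True
    then show ?thesis
      using assms(1) by (simp add: exp_cdf_def tendsto_eventually)
  next
    case False
    then show ?thesis
      using assms(2) by (simp add: exp_cdf_def)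
  qed
qed

lemma complete_bipartite_small_part:
  fixes m :: "nat \<Rightarrow> nat"
  assumes m_inf: "filterlim m at_top sequentially" and m_small: "(\<lambda>n. real (m n) / real n) \<longlonglongrightarrow> 0"
  shows "\<forall>\<^sub>F n in sequentially. 1 \<le> m n \<and> 1 \<le> n - m n"
    and "(\<lambda>n. real (m n) * ((1 / real (m n) + 1 / real (n - m n)) / 2)) \<longlonglongrightarrow> 1 / 2"
proof -
  have "\<forall>\<^sub>F n in sequentially. 1 \<le> m n"
    using m_inf by (simp add: filterlim_at_top)
  moreover have "\<forall>\<^sub>F n in sequentially. real (m n) / real n < 1 / 2"
    using m_small by (rule order_tendstoD) simp
  moreover have "\<forall>\<^sub>F n in sequentially. 0 < n"
    by (rule eventually_gt_at_top)
  ultimately have good: "\<forall>\<^sub>F n in sequentially. 1 \<le> m n \<and> 2 * m n < n"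
    by eventually_elim (auto simp: divide_less_eq split: if_splits)
  then show "\<forall>\<^sub>F n in sequentially. 1 \<le> m n \<and> 1 \<le> n - m n"
    by (auto elim: eventually_mono)
  have "(\<lambda>n. (1 + (real (m n) / real n) / (1 - real (m n) / real n)) / 2) \<longlonglongrightarrow> (1 + 0 / (1 - 0)) / 2"
    by (intro tendsto_intros m_small) simp_all
  moreover have "\<forall>\<^sub>F n in sequentially. (1 + (real (m n) / real n) / (1 - real (m n) / real n)) / 2
      = real (m n) * ((1 / real (m n) + 1 / real (n - m n)) / 2)"
    using good by eventually_elim (auto simp: of_nat_diff field_simps)
  ultimately show "(\<lambda>n. real (m n) * ((1 / real (m n) + 1 / real (n - m n)) / 2)) \<longlonglongrightarrow> 1 / 2"
    by (simp add: Lim_transform_eventually)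
qed

lemma meet_cdf_complete_bipartite_weak_conv:
  fixes m :: "nat \<Rightarrow> nat" and u v :: "nat \<Rightarrow> bool \<times> nat"
  assumes m_inf: "filterlim m at_top sequentially" and m_small: "(\<lambda>n. real (m n) / real n) \<longlonglongrightarrow> 0"
    and edge: "\<forall>\<^sub>F n in sequentially.
      u n \<in> bip_V (m n) (n - m n) \<and> v n \<in> bip_V (m n) (n - m n) \<and> bip_E (u n) (v n)"
  shows "weak_conv (\<lambda>n x. meet_cdf (bip_V (m n) (n - m n)) bip_E (u n) (v n) (real (m n) * x))
                   (exp_cdf (1/4))"
proof (rule weak_conv_exp_cdfI)
  fix x :: real
  assume "x < 0"
  with complete_bipartite_small_part(1)[OF m_inf m_small]
  show "\<forall>\<^sub>F n in sequentially. meet_cdf (bip_V (m n) (n - m n)) bip_E (u n) (v n) (real (m n) * x) = 0"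
    by (auto simp: meet_cdf_def mult_pos_neg elim: eventually_mono)
next
  fix x :: real
  assume "0 \<le> x"
  have "filterlim (\<lambda>n. real (m n)) at_top sequentially"
    by (rule filterlim_compose[OF filterlim_real_sequentially m_inf])
  from meet_cdf_bip_tendsto[OF edge this complete_bipartite_small_part(2)[OF m_inf m_small] \<open>0 \<le> x\<close>]
  show "(\<lambda>n. meet_cdf (bip_V (m n) (n - m n)) bip_E (u n) (v n) (real (m n) * x)) \<longlonglongrightarrow> 1 - exp (- (1/4) * x)"
    by simp
qed

lemma complete_bipartite_epidemic_scaling:
  fixes m :: "nat \<Rightarrow> nat" and lam gam :: "nat \<Rightarrow> real" and x :: real
  assumes m_inf: "filterlim m at_top sequentially" and m_small: "(\<lambda>n. real (m n) / real n) \<longlonglongrightarrow> 0"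
    and lam: "filterlim lam at_top sequentially" and gam: "filterlim gam at_top sequentially"
    and slow: "(\<lambda>n. gam n / (lam n / real (m n))) \<longlonglongrightarrow> 0"
  defines "mu \<equiv> \<lambda>n. (1 / real (m n) + 1 / real (n - m n)) / 2"
  shows "\<forall>\<^sub>F n in sequentially. 1 \<le> m n \<and> 1 \<le> n - m n \<and> 0 < lam n \<and> 0 < gam n"
    and "mu \<longlonglongrightarrow> 0"
    and "(\<lambda>n. gam n / (lam n + gam n) / mu n) \<longlonglongrightarrow> 0"
    and "(\<lambda>n. 2 * (lam n + gam n) * (x / (4 * real (m n) * (gam n)\<^sup>2 / lam n))
           * (gam n / (lam n + gam n))\<^sup>2 / mu n) \<longlonglongrightarrow> x"
proof -
  have "\<forall>\<^sub>F n in sequentially. 0 < lam n" "\<forall>\<^sub>F n in sequentially. 0 < gam n"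
    using lam gam by (auto simp: filterlim_at_top_dense)
  with complete_bipartite_small_part(1)[OF m_inf m_small]
  show good: "\<forall>\<^sub>F n in sequentially. 1 \<le> m n \<and> 1 \<le> n - m n \<and> 0 < lam n \<and> 0 < gam n"
    by eventually_elim auto
  have m_mu: "(\<lambda>n. real (m n) * mu n) \<longlonglongrightarrow> 1 / 2"
    unfolding mu_def by (rule complete_bipartite_small_part(2)[OF m_inf m_small])
  have inv_m: "(\<lambda>n. inverse (real (m n))) \<longlonglongrightarrow> 0"
    by (rule tendsto_inverse_0_at_top[OF filterlim_compose[OF filterlim_real_sequentially m_inf]])
  have frac_algebra: "1 / (1 + g / (l / k) * inverse k) = l / (l + g)"
    if "l \<noteq> 0" "k \<noteq> 0" "l + g \<noteq> 0" for l g k :: real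
    using that by (simp add: field_simps)
  have rate_algebra: "l / s * (g / (l / k)) / (k * u) = g / s / u"
      "x * (l / s) / (2 * (k * u)) = 2 * s * (x / (4 * k * g\<^sup>2 / l)) * (g / s)\<^sup>2 / u"
    if "l \<noteq> 0" "g \<noteq> 0" "k \<noteq> 0" "u \<noteq> 0" "s \<noteq> 0" for l g k u s :: real
    using that by (simp_all add: field_simps power2_eq_square)
  have mu_pos: "\<forall>\<^sub>F n in sequentially. 0 < mu n"
    using good by eventually_elim (auto simp: mu_def intro!: add_pos_pos)
  have "(\<lambda>n. real (m n) * mu n * inverse (real (m n))) \<longlonglongrightarrow> 1 / 2 * 0"
    by (intro tendsto_intros m_mu inv_m)
  moreover have "\<forall>\<^sub>F n in sequentially. real (m n) * mu n * inverse (real (m n)) = mu n"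
    using good by eventually_elim simp
  ultimately show "mu \<longlonglongrightarrow> 0"
    by (simp add: Lim_transform_eventually)
  have "(\<lambda>n. 1 / (1 + gam n / (lam n / real (m n)) * inverse (real (m n)))) \<longlonglongrightarrow> 1 / (1 + 0 * 0)"
    by (intro tendsto_intros slow inv_m) simp_all
  moreover have "\<forall>\<^sub>F n in sequentially.
      1 / (1 + gam n / (lam n / real (m n)) * inverse (real (m n))) = lam n / (lam n + gam n)"
    using good by eventually_elim (rule frac_algebra; auto)
  ultimately have frac: "(\<lambda>n. lam n / (lam n + gam n)) \<longlonglongrightarrow> 1"
    by (simp add: Lim_transform_eventually)
  have "(\<lambda>n. lam n / (lam n + gam n) * (gam n / (lam n / real (m n))) / (real (m n) * mu n))
      \<longlonglongrightarrow> 1 * 0 / (1 / 2)"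
    by (intro tendsto_intros frac slow m_mu) simp
  moreover have "\<forall>\<^sub>F n in sequentially.
      lam n / (lam n + gam n) * (gam n / (lam n / real (m n))) / (real (m n) * mu n) = gam n / (lam n + gam n) / mu n"
    using good mu_pos by eventually_elim (rule rate_algebra(1); auto)
  ultimately show "(\<lambda>n. gam n / (lam n + gam n) / mu n) \<longlonglongrightarrow> 0"
    by (simp add: Lim_transform_eventually)
  have "(\<lambda>n. x * (lam n / (lam n + gam n)) / (2 * (real (m n) * mu n))) \<longlonglongrightarrow> x * 1 / (2 * (1 / 2))"
    by (intro tendsto_intros frac m_mu) simp
  moreover have "\<forall>\<^sub>F n in sequentially. x * (lam n / (lam n + gam n)) / (2 * (real (m n) * mu n))
      = 2 * (lam n + gam n) * (x / (4 * real (m n) * (gam n)\<^sup>2 / lam n)) * (gam n / (lam n + gam n))\<^sup>2 / mu n"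
    using good mu_pos by eventually_elim (rule rate_algebra(2); auto)
  ultimately show "(\<lambda>n. 2 * (lam n + gam n) * (x / (4 * real (m n) * (gam n)\<^sup>2 / lam n))
      * (gam n / (lam n + gam n))\<^sup>2 / mu n) \<longlonglongrightarrow> x"
    by (simp add: Lim_transform_eventually)
qed

lemma end_cdf_complete_bipartite_weak_conv:
  fixes m :: "nat \<Rightarrow> nat" and v0 :: "nat \<Rightarrow> bool \<times> nat" and lam gam :: "nat \<Rightarrow> real"
  assumes m_inf: "filterlim m at_top sequentially" and m_small: "(\<lambda>n. real (m n) / real n) \<longlonglongrightarrow> 0"
    and start: "\<forall>\<^sub>F n in sequentially. v0 n \<in> bip_V (m n) (n - m n)"
    and lam: "filterlim lam at_top sequentially" and gam: "filterlim gam at_top sequentially"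
    and slow: "(\<lambda>n. gam n / (lam n / real (m n))) \<longlonglongrightarrow> 0"
  shows "weak_conv (\<lambda>n x. end_cdf (bip_V (m n) (n - m n)) bip_E (lam n) (gam n) (v0 n)
                             (x / (4 * real (m n) * (gam n)\<^sup>2 / lam n)))
                   (exp_cdf 1)"
proof (rule weak_conv_exp_cdfI)
  note scaling = complete_bipartite_epidemic_scaling[OF m_inf m_small lam gam slow]
  fix x :: real
  assume "x < 0"
  show "\<forall>\<^sub>F n in sequentially. end_cdf (bip_V (m n) (n - m n)) bip_E (lam n) (gam n) (v0 n)
      (x / (4 * real (m n) * (gam n)\<^sup>2 / lam n)) = 0"
    using scaling(1)
  proof eventually_elim
    case (elim n)
    then have "x / (4 * real (m n) * (gam n)\<^sup>2 / lam n) < 0"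
      using \<open>x < 0\<close> by (intro divide_neg_pos) auto
    then show ?case
      unfolding end_cdf_def by simp
  qed
next
  note scaling = complete_bipartite_epidemic_scaling[OF m_inf m_small lam gam slow]
  fix x :: real
  assume "0 \<le> x"
  have "\<forall>\<^sub>F n in sequentially. 1 \<le> m n \<and> 1 \<le> n - m n \<and> 0 < lam n \<and> 0 < gam n
      \<and> v0 n \<in> bip_V (m n) (n - m n) \<and> 0 \<le> x / (4 * real (m n) * (gam n)\<^sup>2 / lam n)"
    using scaling(1) start by eventually_elim (use \<open>0 \<le> x\<close> in auto)
  from end_cdf_bip_tendsto[OF this scaling(2,3) scaling(4)[of x]]
  show "(\<lambda>n. end_cdf (bip_V (m n) (n - m n)) bip_E (lam n) (gam n) (v0 n)
      (x / (4 * real (m n) * (gam n)\<^sup>2 / lam n))) \<longlonglongrightarrow> 1 - exp (- 1 * x)"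
    by simp
qed

theorem mainTheorem6:
  fixes m :: "nat \<Rightarrow> nat"
    and u v v0 :: "nat \<Rightarrow> bool \<times> nat"
    and lam gam :: "nat \<Rightarrow> real"
  assumes m_inf: "filterlim m at_top sequentially"
    and m_small: "(\<lambda>n. real (m n) / real n) \<longlonglongrightarrow> 0"
    and edge: "\<forall>\<^sub>F n in sequentially.
                 u n \<in> bip_V (m n) (n - m n) \<and> v n \<in> bip_V (m n) (n - m n) \<and> bip_E (u n) (v n)"
    and start: "\<forall>\<^sub>F n in sequentially. v0 n \<in> bip_V (m n) (n - m n)"
  shows "weak_conv (\<lambda>n x. meet_cdf (bip_V (m n) (n - m n)) bip_E (u n) (v n) (real (m n) * x))
                   (exp_cdf (1/4))
         \<and> ((filterlim lam at_top sequentially \<and> filterlim gam at_top sequentially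
              \<and> (\<lambda>n. gam n / (lam n / real (m n))) \<longlonglongrightarrow> 0)
            \<longrightarrow> weak_conv (\<lambda>n x. end_cdf (bip_V (m n) (n - m n)) bip_E (lam n) (gam n) (v0 n)
                                   (x / (4 * real (m n) * (gam n)\<^sup>2 / lam n)))
                          (exp_cdf 1))"
  using meet_cdf_complete_bipartite_weak_conv[OF m_inf m_small edge]
    end_cdf_complete_bipartite_weak_conv[OF m_inf m_small start]
  by blast

end
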